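(* Every line of $\mathcal W(5,q)$ has $0$, $1$, $2$ or $q+1$ points in common with $\mathcal O$. Moreover there are exactly $q^2+1$ lines of $\mathcal W(5,q)$ contained in $\mathcal O$, namely the lines of $\mathcal S$.
   Context: Let $q$ be an even prime power and $\mathrm{PG}(5,q^2)$ have homogeneous coordinates $(X_1,\dots,X_6)$, points written as column vectors. Let $\Sigma$ be the set of points having a coordinate vector $(\alpha,\alpha^q,\delta_0,\beta,\beta^q,\delta_1)$ with $\alpha,\beta\in\mathbb F_{q^2}$, $\delta_0,\delta_1\in\mathbb F_q$ (a Baer subgeometry $\cong\mathrm{PG}(5,q)$). Let $\mathcal Q=\Sigma\cap\{X_6=0,\ X_3^2+X_1X_5+X_2X_4=0\}$. Fix $\omega\in\mathbb F_{q^2}\setminus\mathbb F_q$ with $\omega+\omega^q=1$ and let $h(X,Y)=\omega X_1Y_4^q+\omega^qX_1Y_6^q+\omega^qX_2Y_5^q+\omega X_2Y_6^q+X_3Y_6^q+\omega^qX_4Y_1^q+\omega X_5Y_2^q+\omega X_6Y_1^q+\omega^qX_6Y_2^q+X_6Y_3^q$. Restricted to $\Sigma$, $P\perp R\iff h(P,R)=0$ defines a symplectic polarity $\perp$ of $\Sigma$; $\mathcal W(5,q)$ is the associated symplectic polar space. For $a,b,c,d\in\mathbb F_{q^2}$ with $ad+bc=1$ let $M_{a,b,c,d}$ be the $6\times6$ matrix with rows $(a^2,0,0,0,c^2,\tfrac{c(a+c\omega^q)}{\omega})$, $(0,a^{2q},0,c^{2q},0,\tfrac{c^q(a^q+c^q\omega)}{\omega^q})$,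 $(ab,a^qb^q,1,c^qd^q,cd,\tfrac{d(a+c\omega^q)}{\omega}+\tfrac{d^q(a^q+c^q\omega)}{\omega^q}+\tfrac{1}{\omega^{q+1}})$, $(0,b^{2q},0,d^{2q},0,\tfrac{d^q(b^q+d^q\omega)+\omega}{\omega^q})$, $(b^2,0,0,0,d^2,\tfrac{d(b+d\omega^q)+\omega^q}{\omega})$, $(0,0,0,0,0,1)$, and let $G$ be the group of projectivities $X\mapsto M_{a,b,c,d}X$. Fix $\gamma\in\mathbb F_{q^2}$ with $X^2+X+\gamma$ irreducible over $\mathbb F_{q^2}$, let $S_\gamma=\left(\frac{\gamma}{\omega},\frac{\gamma^q}{\omega^q},\frac{\omega^q\gamma}{\omega}+\frac{\omega\gamma^q}{\omega^q},1,1,1\right)$, $S_\gamma^G$ its $G$-orbit, and $\mathcal O=\mathcal Q\cup S_\gamma^G$. Let $\mathcal S$ be the set of the $q^2+1$ lines $S_t=\{(\lambda,\lambda^q,\lambda t+\lambda^qt^q,\lambda^qt^{2q},\lambda t^2,0):\lambda\in\mathbb F_{q^2}^*\}$, $t\in\mathbb F_{q^2}$, and $S_\infty=\{(0,0,0,\lambda^q,\lambda,0):\lambda\in\mathbb F_{q^2}^*\}$. *)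

theory Defs
  imports "HOL-Computational_Algebra.Polynomial" "HOL-Computational_Algebra.Primes"
begin

text \<open>Vectors of F_{q^2}^6 are functions nat => 'a supported on indices 1..6.
  A point of PG(5,q^2) is the set of nonzero scalar multiples of a nonzero vector.\<close>

definition vec6 :: "'a::zero \<Rightarrow> 'a \<Rightarrow> 'a \<Rightarrow> 'a \<Rightarrow> 'a \<Rightarrow> 'a \<Rightarrow> nat \<Rightarrow> 'a" where
  "vec6 x1 x2 x3 x4 x5 x6 = (\<lambda>i. if i = 1 then x1 else if i = 2 then x2 else if i = 3 then x3
     else if i = 4 then x4 else if i = 5 then x5 else if i = 6 then x6 else 0)"

definition pt :: "(nat \<Rightarrow> 'a::field) \<Rightarrow> (nat \<Rightarrow> 'a) set" where
  "pt v = {(\<lambda>i. c * v i) | c. c \<noteq> 0}"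

definition subF :: "nat \<Rightarrow> 'a::field set" where
  "subF q = {x. x ^ q = x}"

definition Sigma :: "nat \<Rightarrow> (nat \<Rightarrow> 'a::field) set set" where
  "Sigma q = {pt (vec6 \<alpha> (\<alpha>^q) d0 \<beta> (\<beta>^q) d1) | \<alpha> \<beta> d0 d1.
      d0 \<in> subF q \<and> d1 \<in> subF q \<and> vec6 \<alpha> (\<alpha>^q) d0 \<beta> (\<beta>^q) d1 \<noteq> (\<lambda>_. 0)}"

definition Qset :: "nat \<Rightarrow> (nat \<Rightarrow> 'a::field) set set" where
  "Qset q = {P \<in> Sigma q. \<exists>v\<in>P. v 6 = 0 \<and> (v 3)^2 + v 1 * v 5 + v 2 * v 4 = 0}"

definition hform :: "nat \<Rightarrow> 'a::field \<Rightarrow> (nat \<Rightarrow> 'a) \<Rightarrow> (nat \<Rightarrow> 'a) \<Rightarrow> 'a" where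
  "hform q \<omega> X Y =
     \<omega> * X 1 * (Y 4)^q + \<omega>^q * X 1 * (Y 6)^q + \<omega>^q * X 2 * (Y 5)^q + \<omega> * X 2 * (Y 6)^q
   + X 3 * (Y 6)^q + \<omega>^q * X 4 * (Y 1)^q + \<omega> * X 5 * (Y 2)^q + \<omega> * X 6 * (Y 1)^q
   + \<omega>^q * X 6 * (Y 2)^q + X 6 * (Y 3)^q"

definition perp :: "nat \<Rightarrow> 'a::field \<Rightarrow> (nat \<Rightarrow> 'a) set \<Rightarrow> (nat \<Rightarrow> 'a) set \<Rightarrow> bool" where
  "perp q \<omega> P R \<longleftrightarrow> (\<exists>v\<in>P. \<exists>w\<in>R. hform q \<omega> v w = 0)"

definition pgline :: "(nat \<Rightarrow> 'a::field) set \<Rightarrow> (nat \<Rightarrow> 'a) set \<Rightarrow> (nat \<Rightarrow> 'a) set set" where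
  "pgline P R = {X. \<exists>u\<in>P. \<exists>w\<in>R. \<exists>a b. (a \<noteq> 0 \<or> b \<noteq> 0) \<and> X = pt (\<lambda>i. a * u i + b * w i)}"

definition sigma_line :: "nat \<Rightarrow> (nat \<Rightarrow> 'a::field) set set \<Rightarrow> bool" where
  "sigma_line q L \<longleftrightarrow> (\<exists>P\<in>Sigma q. \<exists>R\<in>Sigma q. P \<noteq> R \<and> L = Sigma q \<inter> pgline P R)"

definition W_line :: "nat \<Rightarrow> 'a::field \<Rightarrow> (nat \<Rightarrow> 'a) set set \<Rightarrow> bool" where
  "W_line q \<omega> L \<longleftrightarrow> sigma_line q L \<and> (\<forall>X\<in>L. \<forall>Y\<in>L. perp q \<omega> X Y)"

definition Mrows :: "nat \<Rightarrow> 'a::field \<Rightarrow> 'a \<Rightarrow> 'a \<Rightarrow> 'a \<Rightarrow> 'a \<Rightarrow> nat \<Rightarrow> nat \<Rightarrow> 'a" where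
  "Mrows q \<omega> a b c d = (\<lambda>i.
     if i = 1 then vec6 (a^2) 0 0 0 (c^2) (c * (a + c * \<omega>^q) / \<omega>)
     else if i = 2 then vec6 0 (a^(2*q)) 0 (c^(2*q)) 0 (c^q * (a^q + c^q * \<omega>) / \<omega>^q)
     else if i = 3 then vec6 (a*b) (a^q * b^q) 1 (c^q * d^q) (c*d)
        (d * (a + c * \<omega>^q) / \<omega> + d^q * (a^q + c^q * \<omega>) / \<omega>^q + 1 / \<omega>^(q+1))
     else if i = 4 then vec6 0 (b^(2*q)) 0 (d^(2*q)) 0 ((d^q * (b^q + d^q * \<omega>) + \<omega>) / \<omega>^q)
     else if i = 5 then vec6 (b^2) 0 0 0 (d^2) ((d * (b + d * \<omega>^q) + \<omega>^q) / \<omega>)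
     else if i = 6 then vec6 0 0 0 0 0 1
     else (\<lambda>_. 0))"

definition mat_app :: "(nat \<Rightarrow> nat \<Rightarrow> 'a::field) \<Rightarrow> (nat \<Rightarrow> 'a) \<Rightarrow> nat \<Rightarrow> 'a" where
  "mat_app M v = (\<lambda>i. if 1 \<le> i \<and> i \<le> 6 then (\<Sum>j=1..6. M i j * v j) else 0)"

definition S_gamma :: "nat \<Rightarrow> 'a::field \<Rightarrow> 'a \<Rightarrow> nat \<Rightarrow> 'a" where
  "S_gamma q \<omega> \<gamma> = vec6 (\<gamma> / \<omega>) (\<gamma>^q / \<omega>^q) (\<omega>^q * \<gamma> / \<omega> + \<omega> * \<gamma>^q / \<omega>^q) 1 1 1"

definition orbit_S :: "nat \<Rightarrow> 'a::field \<Rightarrow> 'a \<Rightarrow> (nat \<Rightarrow> 'a) set set" where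
  "orbit_S q \<omega> \<gamma> = {pt (mat_app (Mrows q \<omega> a b c d) (S_gamma q \<omega> \<gamma>)) | a b c d. a * d + b * c = 1}"

definition Oset :: "nat \<Rightarrow> 'a::field \<Rightarrow> 'a \<Rightarrow> (nat \<Rightarrow> 'a) set set" where
  "Oset q \<omega> \<gamma> = Qset q \<union> orbit_S q \<omega> \<gamma>"

definition S_line :: "nat \<Rightarrow> 'a::field \<Rightarrow> (nat \<Rightarrow> 'a) set set" where
  "S_line q t = {pt (vec6 l (l^q) (l * t + l^q * t^q) (l^q * t^(2*q)) (l * t^2) 0) | l. l \<noteq> 0}"

definition S_inf :: "nat \<Rightarrow> (nat \<Rightarrow> 'a::field) set set" where
  "S_inf q = {pt (vec6 0 0 0 (l^q) l 0) | l. l \<noteq> 0}"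

definition spread :: "nat \<Rightarrow> (nat \<Rightarrow> 'a::field) set set set" where
  "spread q = range (S_line q) \<union> {S_inf q}"

end

theory Submission
  imports Defs "HOL-Number_Theory.Residues"
begin

text \<open>
  Write \<open>F\<^sub>q\<^sub>2 = F\<^sub>q \<oplus> F\<^sub>q \<omega>\<close>. A line of \<open>W(5,q)\<close> is spanned by vectors \<open>v, w\<close> of \<open>\<Sigma>\<close> with \<open>h(v,w) = 0\<close>,
  \<open>w\<^sub>6 = 0\<close> and \<open>v\<^sub>6 \<in> {0,1}\<close>; its points are \<open>\<langle>w\<rangle>\<close> and \<open>\<langle>v + t w\<rangle>\<close>, \<open>t \<in> F\<^sub>q\<close>. If \<open>v\<^sub>6 = 0\<close> the
  line lies in \<open>X\<^sub>6 = 0\<close> and meets \<open>\<O>\<close> where the quadratic \<open>Q(v + t w)\<close> vanishes. If \<open>v\<^sub>6 = 1\<close>, a point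
  \<open>(\<alpha>, \<alpha>\<^sup>q, \<delta>, \<beta>, \<beta>\<^sup>q, 1)\<close> of \<open>\<Sigma>\<close> lies in \<open>S\<^sub>\<gamma>\<^sup>G\<close> iff \<open>\<omega>\<^sup>2 s\<^sup>2 + \<omega> s + K = 0\<close> has a root \<open>s \<in> F\<^sub>q\<close>,
  where \<open>K\<close> depends on the point; this is a trace condition of degree 4 in \<open>t\<close> along the line, whose
  linear term is \<open>h(v,w) = 0\<close>, so in characteristic 2 it is the square of a quadratic in \<open>t\<close>. In both
  cases \<open>\<langle>w\<rangle> \<in> \<O>\<close> iff the leading coefficient vanishes, whence \<open>0, 1, 2\<close> or \<open>q + 1\<close> common points.
  The line lies in \<open>\<O>\<close> only if its quadratic vanishes identically: for \<open>v\<^sub>6 = 1\<close> this would make \<open>\<gamma>\<close>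
  a value of \<open>x\<^sup>2 + x\<close>, contradicting the irreducibility of \<open>X\<^sup>2 + X + \<gamma>\<close>; for \<open>v\<^sub>6 = 0\<close> the line is
  totally singular for \<open>Q\<close>, and the \<open>h\<close>-isotropic such lines are exactly \<open>S\<^sub>t\<close> and \<open>S\<^sub>\<infinity>\<close>.
\<close>

section \<open>Finite fields of characteristic 2\<close>

lemma irreducible_quadratic_no_root:
  fixes \<gamma> :: "'a::field"
  assumes "irreducible [:\<gamma>, 1, 1:]"
  shows "t^2 + t + \<gamma> \<noteq> 0"
proof
  assume "t^2 + t + \<gamma> = 0"
  hence "poly [:\<gamma>, 1, 1:] t = 0" by (simp add: algebra_simps power2_eq_square)
  then obtain r where r: "[:\<gamma>, 1, 1:] = [:-t, 1:] * r" by (metis poly_eq_0_iff_dvd dvdE)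
  have "\<not> [:-t, 1:] dvd 1" by (simp add: is_unit_poly_iff)
  moreover have "\<not> r dvd 1"
  proof
    assume "r dvd 1"
    then obtain c where "r = [:c:]" by (auto simp: is_unit_poly_iff)
    hence "degree [:\<gamma>, 1, 1:] \<le> degree [:-t, 1:] + degree [:c:]" using r by (metis degree_mult_le)
    thus False by simp
  qed
  ultimately show False using irreducibleD[OF assms r] by blast
qed

lemma power_card_minus_one_eq_1:
  fixes a :: "'a::{field,finite}"
  assumes "a \<noteq> 0"
  shows "a ^ (card (UNIV :: 'a set) - 1) = 1"
proof -
  let ?U = "UNIV - {0::'a}"
  have "bij_betw (\<lambda>x. a * x) ?U ?U"
    by (rule bij_betwI[where g = "\<lambda>x. x / a"]) (use assms in auto)
  hence "(\<Prod>x\<in>?U. a * x) = (\<Prod>x\<in>?U. x)"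
    using prod.reindex_bij_betw[of "\<lambda>x. a * x" ?U ?U "\<lambda>x. x"] by simp
  moreover have "(\<Prod>x\<in>?U. a * x) = a ^ card ?U * (\<Prod>x\<in>?U. x)" by (simp add: prod.distrib)
  moreover have "(\<Prod>x\<in>?U. x) \<noteq> 0" by (simp add: prod_zero_iff)
  moreover have "card ?U = card (UNIV :: 'a set) - 1" by (simp add: card_Diff_singleton)
  ultimately show ?thesis by (metis mult_cancel_right2)
qed

lemma card_roots_quadratic_le_2:
  fixes a b c :: "'a::idom"
  assumes "c \<noteq> 0"
  shows "card {t. c * t^2 + b * t + a = 0} \<le> 2"
proof -
  have "card {t. poly [:a, b, c:] t = 0} \<le> degree [:a, b, c:]"
    by (rule card_poly_roots_bound) (use assms in simp)
  moreover have "{t. poly [:a, b, c:] t = 0} = {t. c * t^2 + b * t + a = 0}"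
    by (auto simp: algebra_simps power2_eq_square)
  ultimately show ?thesis using assms by simp
qed

lemma card_roots_linear_le_1:
  fixes a b :: "'a::field"
  assumes "b \<noteq> 0"
  shows "card {t. b * t + a = 0} \<le> 1"
proof -
  have "{t. b * t + a = 0} \<subseteq> {-a / b}"
    using assms by (auto simp: field_simps eq_neg_iff_add_eq_0)
  hence "card {t. b * t + a = 0} \<le> card {-a / b}" by (intro card_mono) auto
  thus ?thesis by simp
qed

lemma CHAR_2_add_self:
  fixes x :: "'a::ring_1"
  assumes "CHAR('a) = 2"
  shows "x + x = 0"
  using uminus_CHAR_2[OF assms] by (metis add_eq_0_iff2)

lemma CHAR_2_numeral:
  fixes n :: num
  assumes "CHAR('a::ring_1) = 2"
  shows "(numeral (num.Bit0 n) :: 'a) = 0" and "(numeral (num.Bit1 n) :: 'a) = 1"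
  using CHAR_2_add_self[OF assms, of "numeral n"] by (simp_all only: numeral_Bit0 numeral_Bit1) simp_all

lemma CHAR_2_eq_iff_add_eq_0:
  fixes x y :: "'a::ring_1"
  assumes "CHAR('a) = 2"
  shows "x = y \<longleftrightarrow> x + y = 0"
  using uminus_CHAR_2[OF assms, of y] by (metis add_eq_0_iff2)

lemma CHAR_2_power_add:
  fixes x y :: "'a::comm_ring_1"
  assumes "CHAR('a) = 2"
  shows "(x + y) ^ (2 ^ n) = x ^ (2 ^ n) + y ^ (2 ^ n)"
  by (rule freshmans_dream') (use assms in simp_all)

lemma CHAR_2_square_eq_iff:
  fixes x y :: "'a::field"
  assumes "CHAR('a) = 2"
  shows "x^2 = y^2 \<longleftrightarrow> x = y"
proof -
  have "x^2 = y^2 \<longleftrightarrow> (x + y)^2 = 0"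
    using CHAR_2_power_add[OF assms, of x y 1] CHAR_2_eq_iff_add_eq_0[OF assms, of "x^2" "y^2"] by simp
  thus ?thesis using CHAR_2_eq_iff_add_eq_0[OF assms, of x y] by simp
qed

definition artin_schreier :: "'a::ring_1 \<Rightarrow> 'a" where "artin_schreier t = t^2 + t"

definition gamma_form :: "'a::ring_1 \<Rightarrow> 'a \<Rightarrow> 'a \<Rightarrow> 'a" where
  "gamma_form \<gamma> a c = \<gamma> * a^2 + a * c + c^2"

context
  assumes CHAR_2: "CHAR('a::{field,finite}) = 2"
begin

private lemmas char2 = CHAR_2_numeral[OF CHAR_2] CHAR_2_add_self[OF CHAR_2] uminus_CHAR_2[OF CHAR_2]

lemma CHAR_2_exists_sqrt: "\<exists>y::'a. y^2 = x"
proof -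
  have "inj (\<lambda>y::'a. y^2)" by (rule injI) (simp add: CHAR_2_square_eq_iff[OF CHAR_2])
  hence "surj (\<lambda>y::'a. y^2)" by (simp add: finite_UNIV_inj_surj)
  thus ?thesis by (metis surjD)
qed

lemma artin_schreier_add: "artin_schreier ((x::'a) + y) = artin_schreier x + artin_schreier y"
proof -
  have "(x + y)^2 = x^2 + y^2" using CHAR_2_power_add[OF CHAR_2, of x y 1] by simp
  thus ?thesis by (simp add: artin_schreier_def algebra_simps)
qed

lemma artin_schreier_eq_iff: "artin_schreier (x::'a) = artin_schreier t \<longleftrightarrow> x = t \<or> x = t + 1"
proof -
  have "artin_schreier x = artin_schreier t \<longleftrightarrow> artin_schreier (x + t) = 0"
    by (subst CHAR_2_eq_iff_add_eq_0[OF CHAR_2]) (simp add: artin_schreier_add)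
  also have "\<dots> \<longleftrightarrow> (x + t) * (x + t + 1) = 0"
    by (simp add: artin_schreier_def algebra_simps power2_eq_square)
  also have "\<dots> \<longleftrightarrow> x = t \<or> x = t + 1"
    by (simp add: CHAR_2_eq_iff_add_eq_0[OF CHAR_2, of x] add.assoc)
  finally show ?thesis .
qed

lemma card_range_artin_schreier: "card (range (artin_schreier :: 'a \<Rightarrow> 'a)) * 2 = card (UNIV :: 'a set)"
proof -
  have fibre: "card (artin_schreier -` {h} :: 'a set) = 2" if h: "h \<in> range artin_schreier" for h
  proof -
    obtain t where "h = artin_schreier t" using h by auto
    hence "artin_schreier -` {h} = {t, t + 1}" using artin_schreier_eq_iff by auto
    thus ?thesis by simp
  qed
  have "card (UNIV :: 'a set) = card (\<Union>h\<in>range artin_schreier. artin_schreier -` {h} :: 'a set)"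
    by (rule arg_cong[where f = card]) auto
  also have "\<dots> = (\<Sum>h\<in>range artin_schreier. card (artin_schreier -` {h} :: 'a set))"
    by (rule card_UN_disjoint) auto
  also have "\<dots> = (\<Sum>h\<in>range (artin_schreier :: 'a \<Rightarrow> 'a). 2)" using fibre by simp
  finally show ?thesis by simp
qed

text \<open>The image of \<open>artin_schreier\<close> is an additive subgroup of index 2.\<close>

lemma artin_schreier_cover:
  assumes "\<gamma> \<notin> range artin_schreier"
  shows "(x::'a) \<in> range artin_schreier \<or> x + \<gamma> \<in> range artin_schreier"
proof -
  let ?H = "range (artin_schreier :: 'a \<Rightarrow> 'a)"
  have "?H \<inter> (\<lambda>h. h + \<gamma>) ` ?H = {}"
  proof auto
    fix a b :: 'a assume "artin_schreier a = artin_schreier b + \<gamma>"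
    hence "artin_schreier (a + b) = \<gamma>" by (simp add: artin_schreier_add algebra_simps char2)
    thus False using assms by (metis rangeI)
  qed
  moreover have "card ((\<lambda>h. h + \<gamma>) ` ?H) = card ?H" by (rule card_image) (simp add: inj_on_def)
  ultimately have "card (?H \<union> (\<lambda>h. h + \<gamma>) ` ?H) = card (UNIV :: 'a set)"
    using card_Un_disjoint[of ?H] card_range_artin_schreier by simp
  hence "?H \<union> (\<lambda>h. h + \<gamma>) ` ?H = UNIV" by (simp add: card_subset_eq)
  hence "x \<in> ?H \<union> (\<lambda>h. h + \<gamma>) ` ?H" by simp
  thus ?thesis by (auto simp: algebra_simps char2)
qed

lemma artin_schreier_of_square_relation:
  fixes A B C a :: 'a
  assumes "a * B = (A * B + a * C)^2" and "a \<noteq> 0 \<or> B \<noteq> 0"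
  shows "A * C \<in> range artin_schreier"
proof (cases "B = 0")
  case True
  hence "C = 0" using assms by simp
  hence "A * C = artin_schreier 0" by (simp add: artin_schreier_def)
  thus ?thesis by blast
next
  case False
  define w where "w = A + (a / B) * C"
  have "A * B + a * C = B * w" using False by (simp add: w_def field_simps)
  hence "a * B = B^2 * w^2" using assms(1) by (simp add: power_mult_distrib)
  hence "a / B = w^2" using False by (simp add: field_simps power2_eq_square)
  hence "w = A + w^2 * C" using w_def by metis
  hence "C * w^2 + w = C * w^2 + (A + w^2 * C)" by (rule arg_cong)
  also have "\<dots> = A" using CHAR_2_add_self[OF CHAR_2, of "C * w^2"] by (simp add: algebra_simps)
  finally have "C * w^2 + w = A" .
  moreover have "artin_schreier (C * w) = C * (C * w^2 + w)"
    by (simp add: artin_schreier_def power2_eq_square algebra_simps)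
  ultimately have "artin_schreier (C * w) = A * C" by (simp add: mult.commute)
  thus ?thesis by (metis rangeI)
qed

text \<open>If \<open>t\<^sup>2 + t = A w\<^sup>2 + \<gamma>\<close>, then \<open>(a, c) = (1/w, t/w)\<close> represents \<open>A\<close>.\<close>

lemma gamma_form_surj:
  assumes "\<gamma> \<notin> range artin_schreier" and "A \<noteq> 0"
  shows "\<exists>a c. gamma_form \<gamma> a c = (A::'a)"
proof -
  have "\<exists>w. A * w^2 + \<gamma> \<in> range artin_schreier"
  proof (rule ccontr)
    assume "\<not> ?thesis"
    hence "\<forall>w. A * w^2 \<in> range artin_schreier"
      using artin_schreier_cover[OF assms(1)] by (metis add.assoc add_0_right CHAR_2_add_self[OF CHAR_2])
    moreover obtain w where "w^2 = \<gamma> / A" using CHAR_2_exists_sqrt by blast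
    ultimately show False using assms by (metis nonzero_mult_div_cancel_left times_divide_eq_right)
  qed
  then obtain w t where wt: "artin_schreier t = A * w^2 + \<gamma>" by (metis image_iff rangeE)
  have w: "w \<noteq> 0" using wt assms(1) by (metis add_0 mult_zero_right rangeI power_zero_numeral)
  have "gamma_form \<gamma> (1/w) (t/w) = (\<gamma> + t + t^2) / w^2"
    using w by (simp add: gamma_form_def field_simps power2_eq_square)
  also have "\<gamma> + t + t^2 = A * w^2" using wt by (simp add: artin_schreier_def algebra_simps char2)
  finally show ?thesis using w by auto
qed

end

section \<open>Coordinate vectors and points\<close>

definition vscale :: "'a::field \<Rightarrow> (nat \<Rightarrow> 'a) \<Rightarrow> nat \<Rightarrow> 'a" where
  "vscale c v = (\<lambda>i. c * v i)"

definition vadd :: "(nat \<Rightarrow> 'a::field) \<Rightarrow> (nat \<Rightarrow> 'a) \<Rightarrow> nat \<Rightarrow> 'a" where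
  "vadd v w = (\<lambda>i. v i + w i)"

lemma vscale_0 [simp]: "vscale 0 v = (\<lambda>_. 0)"
  and vscale_1 [simp]: "vscale 1 v = v"
  and vadd_0 [simp]: "vadd (\<lambda>_. 0) v = v" "vadd v (\<lambda>_. 0) = v"
  by (simp_all add: vscale_def vadd_def)

lemma vscale_eq_0_iff: "vscale c v = (\<lambda>_. 0) \<longleftrightarrow> c = 0 \<or> v = (\<lambda>_. 0)"
  by (auto simp: vscale_def fun_eq_iff)

lemma lincomb_vscale: "(\<lambda>i. a * (c * v i) + b * (c' * w i)) = vadd (vscale (a * c) v) (vscale (b * c') w)"
  by (simp add: vadd_def vscale_def fun_eq_iff algebra_simps)

lemma vadd_lincomb:
  "vadd (vscale s (vadd (vscale a1 v) (vscale b1 w))) (vscale t (vadd (vscale a2 v) (vscale b2 w)))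
   = vadd (vscale (s * a1 + t * a2) v) (vscale (s * b1 + t * b2) w)"
  by (simp add: vadd_def vscale_def fun_eq_iff algebra_simps)

lemma vadd_eq_0_imp:
  assumes "vadd (vscale a v) (vscale b w) = (\<lambda>_. 0)" and "a \<noteq> 0"
  shows "v = vscale (- b / a) w"
proof -
  have "a * v i + b * w i = 0" for i using assms(1) by (simp add: vadd_def vscale_def fun_eq_iff)
  hence "v i = - b / a * w i" for i using assms(2) by (simp add: field_simps eq_neg_iff_add_eq_0)
  thus ?thesis by (simp add: vscale_def fun_eq_iff)
qed

lemma vec6_simps [simp]:
  "vec6 x1 x2 x3 x4 x5 x6 1 = x1" "vec6 x1 x2 x3 x4 x5 x6 (Suc 0) = x1" "vec6 x1 x2 x3 x4 x5 x6 2 = x2"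
  "vec6 x1 x2 x3 x4 x5 x6 3 = x3" "vec6 x1 x2 x3 x4 x5 x6 4 = x4" "vec6 x1 x2 x3 x4 x5 x6 5 = x5"
  "vec6 x1 x2 x3 x4 x5 x6 6 = x6"
  by (simp_all add: vec6_def)

lemma vec6_out: "i \<notin> {1..6} \<Longrightarrow> vec6 x1 x2 x3 x4 x5 x6 i = 0"
  by (auto simp: vec6_def)

lemma vec6_expand:
  assumes "\<forall>i. i \<notin> {1..6} \<longrightarrow> v i = 0"
  shows "v = vec6 (v 1) (v 2) (v 3) (v 4) (v 5) (v 6)"
proof
  fix i
  show "v i = vec6 (v 1) (v 2) (v 3) (v 4) (v 5) (v 6) i"
  proof (cases "i \<in> {1..6}")
    case True
    hence "i = 1 \<or> i = 2 \<or> i = 3 \<or> i = 4 \<or> i = 5 \<or> i = 6" by auto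
    thus ?thesis by auto
  qed (use assms vec6_out in simp)
qed

lemma vec6_eq_iff:
  "vec6 x1 x2 x3 x4 x5 x6 = vec6 y1 y2 y3 y4 y5 y6 \<longleftrightarrow>
   x1 = y1 \<and> x2 = y2 \<and> x3 = y3 \<and> x4 = y4 \<and> x5 = y5 \<and> x6 = y6"
proof
  assume "vec6 x1 x2 x3 x4 x5 x6 = vec6 y1 y2 y3 y4 y5 y6"
  from fun_cong[OF this, of 1] fun_cong[OF this, of 2] fun_cong[OF this, of 3]
    fun_cong[OF this, of 4] fun_cong[OF this, of 5] fun_cong[OF this, of 6]
  show "x1 = y1 \<and> x2 = y2 \<and> x3 = y3 \<and> x4 = y4 \<and> x5 = y5 \<and> x6 = y6" by simp
qed simp

lemma vec6_eq_0_iff: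
  "vec6 x1 x2 x3 x4 x5 x6 = (\<lambda>_. 0) \<longleftrightarrow> x1 = 0 \<and> x2 = 0 \<and> x3 = 0 \<and> x4 = 0 \<and> x5 = 0 \<and> x6 = 0"
proof -
  have "(\<lambda>_. 0) = vec6 0 0 0 0 0 (0::'a)" by (auto simp: vec6_def fun_eq_iff)
  thus ?thesis by (simp add: vec6_eq_iff)
qed

lemma vscale_vec6: "vscale c (vec6 x1 x2 x3 x4 x5 x6) = vec6 (c*x1) (c*x2) (c*x3) (c*x4) (c*x5) (c*x6)"
  by (auto simp: vscale_def vec6_def fun_eq_iff)

lemma vadd_vec6:
  "vadd (vec6 x1 x2 x3 x4 x5 x6) (vec6 y1 y2 y3 y4 y5 y6) =
   vec6 (x1 + y1) (x2 + y2) (x3 + y3) (x4 + y4) (x5 + y5) (x6 + y6)"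
  by (auto simp: vadd_def vec6_def fun_eq_iff)

lemma sum_1_6: "(\<Sum>j::nat = 1..6. f j) = f 1 + f 2 + f 3 + f 4 + f 5 + (f 6 :: 'b::comm_monoid_add)"
  by (simp add: numeral_eq_Suc sum.atLeast_Suc_atMost add.assoc)

lemma pt_eq_vscale: "pt v = {vscale c v | c. c \<noteq> 0}"
  by (simp add: pt_def vscale_def)

lemma in_pt: "v \<in> pt v"
  unfolding pt_eq_vscale by (rule CollectI, rule exI[of _ 1]) simp

lemma pt_vscale: "c \<noteq> 0 \<Longrightarrow> pt (vscale c v) = pt v"
  unfolding pt_eq_vscale
proof (auto simp: vscale_def)
  fix d :: 'a assume "c \<noteq> 0" "d \<noteq> 0"
  thus "\<exists>e. (\<lambda>i. d * (c * v i)) = (\<lambda>i. e * v i) \<and> e \<noteq> 0" by (intro exI[of _ "d * c"]) auto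
  show "\<exists>e. (\<lambda>i. d * v i) = (\<lambda>i. e * (c * v i)) \<and> e \<noteq> 0" by (intro exI[of _ "d / c"]) (use \<open>c \<noteq> 0\<close> \<open>d \<noteq> 0\<close> in auto)
qed

lemma pt_eq_iff:
  assumes "v \<noteq> (\<lambda>_. 0)"
  shows "pt v = pt w \<longleftrightarrow> (\<exists>c. c \<noteq> 0 \<and> w = vscale c v)"
proof
  assume "pt v = pt w"
  then obtain c where c: "c \<noteq> 0" "v = vscale c w" using in_pt[of v] by (auto simp: pt_eq_vscale)
  hence "w = vscale (1 / c) v" by (auto simp: vscale_def fun_eq_iff)
  thus "\<exists>c. c \<noteq> 0 \<and> w = vscale c v" using c by (intro exI[of _ "1 / c"]) auto
qed (use pt_vscale in metis)

lemma pt_eq_pt_normalized: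
  assumes "u 6 = 1"
  shows "pt u = pt v \<longleftrightarrow> v 6 \<noteq> 0 \<and> u = vscale (1 / v 6) v"
proof
  have "u \<noteq> (\<lambda>_. 0)" using assms by auto
  moreover assume "pt u = pt v"
  ultimately obtain k where "k \<noteq> 0" "v = vscale k u" using pt_eq_iff by blast
  thus "v 6 \<noteq> 0 \<and> u = vscale (1 / v 6) v" using assms by (simp add: vscale_def fun_eq_iff)
next
  assume "v 6 \<noteq> 0 \<and> u = vscale (1 / v 6) v"
  thus "pt u = pt v" using pt_vscale[of "1 / v 6" v] by simp
qed

lemma hform_vscale: "hform q \<omega> (vscale c v) (vscale c' w) = c * c'^q * hform q \<omega> v w"
  by (simp add: hform_def vscale_def power_mult_distrib algebra_simps)

lemma perp_pt_iff: "perp q \<omega> (pt v) (pt w) \<longleftrightarrow> hform q \<omega> v w = 0"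
proof
  assume "perp q \<omega> (pt v) (pt w)"
  then obtain c c' where "c \<noteq> 0" "c' \<noteq> 0" "hform q \<omega> (vscale c v) (vscale c' w) = 0"
    unfolding perp_def pt_eq_vscale by blast
  thus "hform q \<omega> v w = 0" by (simp add: hform_vscale)
qed (use in_pt in \<open>auto simp: perp_def\<close>)

section \<open>The field \<open>F\<^sub>q\<^sub>2\<close> over \<open>F\<^sub>q\<close>\<close>

locale W5q =
  fixes q e :: nat and \<omega> :: "'a::{field,finite}"
  assumes q_eq: "q = 2^e" and e_ge_1: "1 \<le> e"
    and card_field: "card (UNIV :: 'a set) = q^2"
    and \<omega>_notin_Fq: "\<omega>^q \<noteq> \<omega>" and \<omega>_add_\<omega>_power_q: "\<omega> + \<omega>^q = 1"
begin

lemma CHAR_eq_2: "CHAR('a) = 2"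
proof -
  have "prime CHAR('a)" by (rule prime_CHAR_semidom, rule finite_imp_CHAR_pos) simp
  moreover have "CHAR('a) dvd 2^(2*e)"
    using CHAR_dvd_CARD[where 'a='a] card_field q_eq by (simp add: power_mult[symmetric] mult.commute)
  ultimately show ?thesis
    by (metis prime_dvd_power_nat primes_dvd_imp_eq two_is_prime_nat)
qed

lemmas add_self_char2 = CHAR_2_add_self[OF CHAR_eq_2]
lemmas eq_iff_add_eq_0 = CHAR_2_eq_iff_add_eq_0[OF CHAR_eq_2]
lemmas square_eq_iff = CHAR_2_square_eq_iff[OF CHAR_eq_2]
lemmas exists_sqrt = CHAR_2_exists_sqrt[OF CHAR_eq_2]

lemma add_cancel_left_char2: "(x::'a) + (x + y) = y"
  by (metis add.assoc add_0 add_self_char2)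

lemmas char2_simps = CHAR_2_numeral[OF CHAR_eq_2] add_self_char2 add_cancel_left_char2
  uminus_CHAR_2[OF CHAR_eq_2] minus_CHAR_2[OF CHAR_eq_2]

lemma square_add: "((x::'a) + y)^2 = x^2 + y^2"
  using CHAR_2_power_add[OF CHAR_eq_2, of x y 1] by simp

lemma q_ge_2: "q \<ge> 2"
  using q_eq e_ge_1 by (metis power_one_right power_increasing pos2 one_le_numeral)

lemma frobenius_add: "((x::'a) + y)^q = x^q + y^q"
  using CHAR_2_power_add[OF CHAR_eq_2] q_eq by simp

lemma frobenius_power_2q [simp]: "(x::'a)^(2*q) = (x^q)^2"
  by (simp add: power_mult[symmetric] mult.commute)

lemmas frobenius_simps = frobenius_add power_mult_distrib power_divide

lemma power_q_q: "(x::'a)^(q*q) = x"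
proof (cases "x = 0")
  case True thus ?thesis using q_ge_2 by simp
next
  case False
  have "q*q = (card (UNIV::'a set) - 1) + 1" using card_field q_ge_2 by (simp add: power2_eq_square)
  thus ?thesis using power_card_minus_one_eq_1[OF False] by (simp add: power_add)
qed

lemma frobenius_frobenius [simp]: "((x::'a)^q)^q = x"
  by (simp add: power_mult[symmetric] power_q_q)

lemma power_q_q_mult: "(x::'a)^(q*(q*n)) = x^n"
  by (simp add: mult.assoc[symmetric] power_mult power_q_q)

lemma frobenius_eq_0_iff [simp]: "((x::'a)^q = 0) \<longleftrightarrow> x = 0"
  using q_ge_2 by simp

abbreviation Fq :: "'a set" where "Fq \<equiv> subF q"

lemma Fq_iff: "x \<in> Fq \<longleftrightarrow> x^q = x"
  by (simp add: subF_def)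

lemma zero_in_Fq [simp]: "0 \<in> Fq" and one_in_Fq [simp]: "1 \<in> Fq"
  using q_ge_2 by (simp_all add: Fq_iff)

lemma Fq_add: "x \<in> Fq \<Longrightarrow> y \<in> Fq \<Longrightarrow> x + y \<in> Fq"
  by (simp add: Fq_iff frobenius_add)

lemma Fq_mult: "x \<in> Fq \<Longrightarrow> y \<in> Fq \<Longrightarrow> x * y \<in> Fq"
  by (simp add: Fq_iff power_mult_distrib)

lemma Fq_divide: "x \<in> Fq \<Longrightarrow> y \<in> Fq \<Longrightarrow> x / y \<in> Fq"
  by (simp add: Fq_iff power_divide)

lemma Fq_power: "x \<in> Fq \<Longrightarrow> x^n \<in> Fq"
  unfolding Fq_iff by (metis power_mult mult.commute)

definition trace :: "'a \<Rightarrow> 'a" where "trace x = x + x^q"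

lemma trace_in_Fq: "trace x \<in> Fq"
  by (simp add: Fq_iff trace_def frobenius_add add.commute)

lemma trace_add: "trace (x + y) = trace x + trace y"
  by (simp add: trace_def frobenius_add algebra_simps)

lemma trace_mult_Fq: "k \<in> Fq \<Longrightarrow> trace (k * x) = k * trace x"
  by (simp add: trace_def Fq_iff power_mult_distrib algebra_simps)

lemma trace_eq_0_iff: "trace x = 0 \<longleftrightarrow> x \<in> Fq"
  by (auto simp: trace_def Fq_iff eq_iff_add_eq_0[symmetric])

lemma trace_Fq: "k \<in> Fq \<Longrightarrow> trace k = 0"
  by (simp add: trace_eq_0_iff)

lemma trace_square: "(trace x)^2 = trace (x^2)"
  by (simp add: trace_def square_add power_mult[symmetric] mult.commute)

lemma \<omega>_power_q: "\<omega>^q = 1 + \<omega>"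
  using \<omega>_add_\<omega>_power_q by (metis add.commute add_cancel_left_char2)

lemma \<omega>_nonzero: "\<omega> \<noteq> 0"
  using \<omega>_notin_Fq q_ge_2 by auto

lemma trace_\<omega>_eq_1: "trace \<omega> = 1"
  by (simp add: trace_def \<omega>_add_\<omega>_power_q)

lemma trace_\<omega>_square: "trace (\<omega>^2) = 1"
  using trace_square[of \<omega>] by (simp add: trace_\<omega>_eq_1)

lemma Fq_\<omega>_decomposition: "x = trace (\<omega>^q * x) + trace x * \<omega>"
proof -
  have "trace (\<omega>^q * x) = \<omega>^q * x + \<omega> * x^q" by (simp add: trace_def power_mult_distrib)
  thus ?thesis by (simp add: trace_def \<omega>_power_q algebra_simps char2_simps)
qed

lemma eq_0_iff_traces: "x = 0 \<longleftrightarrow> trace x = 0 \<and> trace (\<omega>^q * x) = 0"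
  using Fq_\<omega>_decomposition[of x] q_ge_2 by (auto simp: trace_def)

lemma Fq_\<omega>_independent:
  assumes "s \<in> Fq" "r \<in> Fq" "s + r * \<omega> = 0"
  shows "s = 0 \<and> r = 0"
proof -
  have "r = 0"
  proof (rule ccontr)
    assume "r \<noteq> 0"
    hence "\<omega> = s / r" using assms(3) by (simp add: field_simps) (metis add_eq_0_iff2 uminus_CHAR_2[OF CHAR_eq_2])
    hence "\<omega> \<in> Fq" using assms(1,2) Fq_divide by simp
    thus False using \<omega>_notin_Fq Fq_iff by simp
  qed
  thus ?thesis using assms(3) by simp
qed

lemma card_Fq: "card Fq = q"
proof -
  have "bij_betw (\<lambda>(s, r). s + r * \<omega>) (Fq \<times> Fq) (UNIV :: 'a set)"
  proof (rule bij_betwI')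
    fix x y assume "x \<in> Fq \<times> Fq" "y \<in> Fq \<times> Fq"
    then obtain s r s' r' where xy: "x = (s, r)" "y = (s', r')" "s \<in> Fq" "r \<in> Fq" "s' \<in> Fq" "r' \<in> Fq"
      by auto
    have "s + r * \<omega> = s' + r' * \<omega> \<longleftrightarrow> (s + s') + (r + r') * \<omega> = 0"
      by (subst eq_iff_add_eq_0) (simp add: algebra_simps)
    also have "\<dots> \<longleftrightarrow> s + s' = 0 \<and> r + r' = 0"
      using Fq_\<omega>_independent[of "s + s'" "r + r'"] Fq_add xy by auto
    also have "\<dots> \<longleftrightarrow> s = s' \<and> r = r'" by (metis eq_iff_add_eq_0)
    finally show "((\<lambda>(s, r). s + r * \<omega>) x = (\<lambda>(s, r). s + r * \<omega>) y) = (x = y)" using xy by auto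
  next
    fix y :: 'a
    show "\<exists>x\<in>Fq \<times> Fq. y = (\<lambda>(s, r). s + r * \<omega>) x"
      by (rule bexI[of _ "(trace (\<omega>^q * y), trace y)"])
         (auto simp: trace_in_Fq intro: Fq_\<omega>_decomposition)
  qed simp
  hence "card (UNIV :: 'a set) = card Fq * card Fq"
    by (simp add: bij_betw_same_card[symmetric] card_cartesian_product)
  hence "q^2 = (card Fq)^2" using card_field by (simp add: power2_eq_square)
  thus ?thesis by (simp add: power2_eq_iff_nonneg)
qed

section \<open>The Baer subgeometry \<open>\<Sigma>\<close> and its lines\<close>

definition sigma_vec :: "(nat \<Rightarrow> 'a) \<Rightarrow> bool" where
  "sigma_vec v \<longleftrightarrow>
     (\<forall>i. i \<notin> {1..6} \<longrightarrow> v i = 0) \<and> v 2 = (v 1)^q \<and> v 5 = (v 4)^q \<and> v 3 \<in> Fq \<and> v 6 \<in> Fq"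

lemma sigma_vec_vec6: "sigma_vec (vec6 a (a^q) d b (b^q) f) \<longleftrightarrow> d \<in> Fq \<and> f \<in> Fq"
  by (simp add: sigma_vec_def vec6_out)

lemma sigma_vecE:
  assumes "sigma_vec v"
  obtains a d b f where "v = vec6 a (a^q) d b (b^q) f" "d \<in> Fq" "f \<in> Fq"
  using vec6_expand[of v] assms that unfolding sigma_vec_def by metis

lemma Sigma_eq: "Sigma q = {pt v | v. sigma_vec v \<and> v \<noteq> (\<lambda>_. 0)}"
  unfolding Sigma_def by (auto simp: sigma_vec_vec6 elim!: sigma_vecE)

lemma sigma_vec_lincomb:
  "sigma_vec v \<Longrightarrow> sigma_vec w \<Longrightarrow> s \<in> Fq \<Longrightarrow> t \<in> Fq \<Longrightarrow> sigma_vec (vadd (vscale s v) (vscale t w))"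
  by (auto simp: sigma_vec_def vadd_def vscale_def Fq_iff frobenius_simps Fq_add Fq_mult)

lemma sigma_vec_scalar_in_Fq:
  assumes "sigma_vec v" "sigma_vec (vscale c v)" "v \<noteq> (\<lambda>_. 0)"
  shows "c \<in> Fq"
proof -
  obtain a d b f where v: "v = vec6 a (a^q) d b (b^q) f" "d \<in> Fq" "f \<in> Fq"
    using assms(1) sigma_vecE by metis
  have c: "c * a^q = (c * a)^q" "c * b^q = (c * b)^q" "c * d \<in> Fq" "c * f \<in> Fq"
    using assms(2) unfolding v vscale_vec6 sigma_vec_def by auto
  consider "a \<noteq> 0" | "b \<noteq> 0" | "d \<noteq> 0" | "f \<noteq> 0"
    using assms(3) q_ge_2 unfolding v by (auto simp: vec6_eq_0_iff)
  thus ?thesis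
  proof cases
    case 1 thus ?thesis using c(1) by (simp add: Fq_iff power_mult_distrib)
  next
    case 2 thus ?thesis using c(2) by (simp add: Fq_iff power_mult_distrib)
  next
    case 3 thus ?thesis using Fq_divide[OF c(3) v(2)] by simp
  next
    case 4 thus ?thesis using Fq_divide[OF c(4) v(3)] by simp
  qed
qed

lemma pt_eq_iff_sigma:
  assumes "sigma_vec v" "sigma_vec w" "v \<noteq> (\<lambda>_. 0)"
  shows "pt v = pt w \<longleftrightarrow> (\<exists>k. k \<in> Fq \<and> k \<noteq> 0 \<and> w = vscale k v)"
  using pt_eq_iff[OF assms(3)] sigma_vec_scalar_in_Fq assms by metis

definition Fq_indep :: "(nat \<Rightarrow> 'a) \<Rightarrow> (nat \<Rightarrow> 'a) \<Rightarrow> bool" where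
  "Fq_indep v w \<longleftrightarrow>
     (\<forall>s t. s \<in> Fq \<longrightarrow> t \<in> Fq \<longrightarrow> vadd (vscale s v) (vscale t w) = (\<lambda>_. 0) \<longrightarrow> s = 0 \<and> t = 0)"

lemma Fq_indep_nonzero: "Fq_indep v w \<Longrightarrow> v \<noteq> (\<lambda>_. 0) \<and> w \<noteq> (\<lambda>_. 0)"
  unfolding Fq_indep_def by (metis one_in_Fq zero_in_Fq vadd_0 vscale_0 vscale_1 zero_neq_one)

lemma Fq_indep_lincomb_nonzero:
  "Fq_indep v w \<Longrightarrow> t \<in> Fq \<Longrightarrow> vadd v (vscale t w) \<noteq> (\<lambda>_. 0)"
  unfolding Fq_indep_def by (metis one_in_Fq vscale_1 zero_neq_one)

lemma Fq_indepD:
  assumes "sigma_vec v" "sigma_vec w" "Fq_indep v w" "vadd (vscale u v) (vscale t w) = (\<lambda>_. 0)"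
  shows "u = 0 \<and> t = 0"
proof (cases "u = 0")
  case True
  thus ?thesis using assms(4) Fq_indep_nonzero[OF assms(3)] by (simp add: vscale_eq_0_iff)
next
  case False
  define r where "r = t / u"
  have v: "v = vscale r w" using vadd_eq_0_imp[OF assms(4) False] by (simp add: r_def uminus_CHAR_2[OF CHAR_eq_2])
  hence "r \<in> Fq" using sigma_vec_scalar_in_Fq assms(1,2) Fq_indep_nonzero[OF assms(3)] by blast
  moreover have "vadd (vscale 1 v) (vscale r w) = (\<lambda>_. 0)"
    using v by (simp add: vadd_def vscale_def add_self_char2)
  ultimately show ?thesis using assms(3) unfolding Fq_indep_def by (metis one_in_Fq zero_neq_one)
qed

text \<open>The semilinear involution whose fixed vectors are those of \<open>\<Sigma>\<close>.\<close>

definition baer_conj :: "(nat \<Rightarrow> 'a) \<Rightarrow> nat \<Rightarrow> 'a" where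
  "baer_conj v = vec6 ((v 2)^q) ((v 1)^q) ((v 3)^q) ((v 5)^q) ((v 4)^q) ((v 6)^q)"

lemma baer_conj_sigma_vec: "sigma_vec v \<Longrightarrow> baer_conj v = v"
  by (auto elim!: sigma_vecE simp: baer_conj_def Fq_iff)

lemma baer_conj_lincomb:
  "baer_conj (vadd (vscale a v) (vscale b w)) = vadd (vscale (a^q) (baer_conj v)) (vscale (b^q) (baer_conj w))"
  by (simp add: baer_conj_def vadd_vec6 vscale_vec6) (simp add: vadd_def vscale_def frobenius_simps)

lemma baer_conj_vscale: "baer_conj (vscale k z) = vscale (k^q) (baer_conj z)"
  by (simp add: baer_conj_def vscale_vec6) (simp add: vscale_def power_mult_distrib)

lemma lincomb_frobenius_ratio:
  assumes "sigma_vec v" "sigma_vec w" "sigma_vec z" "Fq_indep v w" "k \<noteq> 0"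
    and E: "vadd (vscale a v) (vscale b w) = vscale k z"
  shows "\<exists>m. m \<noteq> 0 \<and> a^q = m * a \<and> b^q = m * b"
proof -
  define m where "m = k^q / k"
  have m: "m \<noteq> 0" using assms(5) by (simp add: m_def)
  have "vadd (vscale (a^q) v) (vscale (b^q) w) = vscale (k^q) z"
    using arg_cong[OF E, of baer_conj] baer_conj_lincomb baer_conj_vscale
      baer_conj_sigma_vec[OF assms(1)] baer_conj_sigma_vec[OF assms(2)] baer_conj_sigma_vec[OF assms(3)]
    by simp
  also have "\<dots> = vscale m (vscale k z)"
    using assms(5) by (simp add: m_def vscale_def)
  also have "\<dots> = vadd (vscale (m * a) v) (vscale (m * b) w)"
    unfolding E[symmetric] by (simp add: fun_eq_iff vadd_def vscale_def algebra_simps)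
  finally have eq: "a^q * v i + b^q * w i = m * a * v i + m * b * w i" for i
    by (simp add: fun_eq_iff vadd_def vscale_def)
  have "(a^q + m * a) * v i + (b^q + m * b) * w i = 0" for i
    using eq[of i] add_self_char2[of "m * a * v i + m * b * w i"] by (simp add: algebra_simps)
  hence "vadd (vscale (a^q + m * a) v) (vscale (b^q + m * b) w) = (\<lambda>_. 0)"
    by (simp add: fun_eq_iff vadd_def vscale_def)
  hence "a^q + m * a = 0 \<and> b^q + m * b = 0" using Fq_indepD assms(1,2,4) by blast
  thus ?thesis using m eq_iff_add_eq_0 by blast
qed

definition line_pts :: "(nat \<Rightarrow> 'a) \<Rightarrow> (nat \<Rightarrow> 'a) \<Rightarrow> (nat \<Rightarrow> 'a) set set" where
  "line_pts v w = {pt (vadd v (vscale t w)) | t. t \<in> Fq} \<union> {pt w}"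

lemma sigma_vec_line: "sigma_vec v \<Longrightarrow> sigma_vec w \<Longrightarrow> t \<in> Fq \<Longrightarrow> sigma_vec (vadd v (vscale t w))"
  using sigma_vec_lincomb[of v w 1 t] by simp

lemma lincomb_in_Sigma_imp_line_pts:
  assumes "sigma_vec v" "sigma_vec w" "Fq_indep v w" "a \<noteq> 0 \<or> b \<noteq> 0"
    and "pt (vadd (vscale a v) (vscale b w)) \<in> Sigma q"
  shows "pt (vadd (vscale a v) (vscale b w)) \<in> line_pts v w"
proof -
  obtain z where z: "pt z = pt (vadd (vscale a v) (vscale b w))" "sigma_vec z" "z \<noteq> (\<lambda>_. 0)"
    using assms(5) unfolding Sigma_eq by auto
  then obtain k where "k \<noteq> 0" "vadd (vscale a v) (vscale b w) = vscale k z"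
    using pt_eq_iff by metis
  then obtain m where m: "m \<noteq> 0" "a^q = m * a" "b^q = m * b"
    using lincomb_frobenius_ratio assms(1-3) z(2) by metis
  show ?thesis
  proof (cases "a = 0")
    case True
    hence "pt (vadd (vscale a v) (vscale b w)) = pt w" using assms(4) pt_vscale by simp
    thus ?thesis by (simp add: line_pts_def)
  next
    case False
    have "b / a \<in> Fq" using m False by (simp add: Fq_iff power_divide)
    moreover have "vadd (vscale a v) (vscale b w) = vscale a (vadd v (vscale (b / a) w))"
      using False by (simp add: vadd_def vscale_def fun_eq_iff algebra_simps)
    ultimately show ?thesis using pt_vscale[OF False] unfolding line_pts_def by auto
  qed
qed

lemma Sigma_Int_pgline:
  assumes "sigma_vec v" "sigma_vec w" "Fq_indep v w"
  shows "Sigma q \<inter> pgline (pt v) (pt w) = line_pts v w"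
proof (intro Set.set_eqI iffI)
  fix X assume X: "X \<in> Sigma q \<inter> pgline (pt v) (pt w)"
  then obtain c c' a b where "c \<noteq> 0" "c' \<noteq> 0" "a \<noteq> 0 \<or> b \<noteq> 0"
      "X = pt (\<lambda>i. a * (c * v i) + b * (c' * w i))"
    unfolding pgline_def pt_eq_vscale by (auto simp: vscale_def)
  thus "X \<in> line_pts v w"
    using lincomb_in_Sigma_imp_line_pts[OF assms, of "a * c" "b * c'"] X by (simp add: lincomb_vscale)
next
  have pgline: "pt (\<lambda>i. s * v i + t * w i) \<in> pgline (pt v) (pt w)" if "s \<noteq> 0 \<or> t \<noteq> 0" for s t
    unfolding pgline_def using in_pt[of v] in_pt[of w] that by blast
  fix X assume "X \<in> line_pts v w"
  then consider t where "t \<in> Fq" "X = pt (vadd v (vscale t w))" | "X = pt w"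
    unfolding line_pts_def by blast
  thus "X \<in> Sigma q \<inter> pgline (pt v) (pt w)"
  proof cases
    case 1
    thus ?thesis unfolding Sigma_eq using sigma_vec_line[OF assms(1,2)] Fq_indep_lincomb_nonzero[OF assms(3)]
        pgline[of 1 t] by (auto simp: vadd_def vscale_def)
  next
    case 2
    thus ?thesis unfolding Sigma_eq using assms(2) Fq_indep_nonzero[OF assms(3)] pgline[of 0 1] by auto
  qed
qed

definition Fq_span :: "(nat \<Rightarrow> 'a) \<Rightarrow> (nat \<Rightarrow> 'a) \<Rightarrow> (nat \<Rightarrow> 'a) set set" where
  "Fq_span v w = {pt (vadd (vscale s v) (vscale t w)) | s t. s \<in> Fq \<and> t \<in> Fq \<and> (s \<noteq> 0 \<or> t \<noteq> 0)}"

lemma line_pts_eq_Fq_span: "line_pts v w = Fq_span v w"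
proof (intro Set.set_eqI iffI)
  fix X assume "X \<in> line_pts v w"
  then consider t where "t \<in> Fq" "X = pt (vadd v (vscale t w))" | "X = pt w"
    unfolding line_pts_def by blast
  thus "X \<in> Fq_span v w"
  proof cases
    case 1 thus ?thesis unfolding Fq_span_def by (intro CollectI exI[of _ 1] exI[of _ t]) auto
  next
    case 2 thus ?thesis unfolding Fq_span_def by (intro CollectI exI[of _ 0] exI[of _ 1]) auto
  qed
next
  fix X assume "X \<in> Fq_span v w"
  then obtain s t where st: "s \<in> Fq" "t \<in> Fq" "s \<noteq> 0 \<or> t \<noteq> 0" "X = pt (vadd (vscale s v) (vscale t w))"
    unfolding Fq_span_def by blast
  show "X \<in> line_pts v w"
  proof (cases "s = 0")
    case True
    hence "X = pt w" using st pt_vscale by simp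
    thus ?thesis by (simp add: line_pts_def)
  next
    case False
    have "vadd (vscale s v) (vscale t w) = vscale s (vadd v (vscale (t / s) w))"
      using False by (simp add: vadd_def vscale_def fun_eq_iff algebra_simps)
    moreover have "t / s \<in> Fq" using st Fq_divide by blast
    ultimately show ?thesis using st(4) pt_vscale[OF False] by (auto simp: line_pts_def)
  qed
qed

lemma det_nonzero_imp:
  fixes s t a1 a2 b1 b2 :: 'a
  assumes "s * a1 + t * a2 = 0" "s * b1 + t * b2 = 0" "a1 * b2 + a2 * b1 \<noteq> 0"
  shows "s = 0 \<and> t = 0"
proof -
  have "s * (a1 * b2 + a2 * b1) = b2 * (s * a1 + t * a2) + a2 * (s * b1 + t * b2)"
    and "t * (a1 * b2 + a2 * b1) = b1 * (s * a1 + t * a2) + a1 * (s * b1 + t * b2)"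
    by (simp_all add: algebra_simps char2_simps)
  hence "s * (a1 * b2 + a2 * b1) = 0" "t * (a1 * b2 + a2 * b1) = 0"
    by (simp_all only: assms(1,2) mult_zero_right add_0)
  thus ?thesis using assms(3) by simp
qed

lemma Fq_span_lincomb_subset:
  assumes "a1 \<in> Fq" "b1 \<in> Fq" "a2 \<in> Fq" "b2 \<in> Fq" "a1 * b2 + a2 * b1 \<noteq> 0"
  shows "Fq_span (vadd (vscale a1 v) (vscale b1 w)) (vadd (vscale a2 v) (vscale b2 w)) \<subseteq> Fq_span v w"
proof
  fix X assume "X \<in> Fq_span (vadd (vscale a1 v) (vscale b1 w)) (vadd (vscale a2 v) (vscale b2 w))"
  then obtain s t where st: "s \<in> Fq" "t \<in> Fq" "s \<noteq> 0 \<or> t \<noteq> 0"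
    "X = pt (vadd (vscale (s * a1 + t * a2) v) (vscale (s * b1 + t * b2) w))"
    unfolding Fq_span_def vadd_lincomb by blast
  have "s * a1 + t * a2 \<noteq> 0 \<or> s * b1 + t * b2 \<noteq> 0" using det_nonzero_imp assms(5) st(3) by blast
  moreover have "s * a1 + t * a2 \<in> Fq" "s * b1 + t * b2 \<in> Fq" using st assms by (simp_all add: Fq_add Fq_mult)
  ultimately show "X \<in> Fq_span v w" using st(4) unfolding Fq_span_def by blast
qed

text \<open>The inverse base change has matrix \<open>(b2, b1; a2, a1) / (a1 b2 + a2 b1)\<close>.\<close>

lemma line_pts_base_change:
  assumes "sigma_vec v" "sigma_vec w" "Fq_indep v w"
    and "a1 \<in> Fq" "b1 \<in> Fq" "a2 \<in> Fq" "b2 \<in> Fq" "a1 * b2 + a2 * b1 \<noteq> 0"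
  defines "v' \<equiv> vadd (vscale a1 v) (vscale b1 w)" and "w' \<equiv> vadd (vscale a2 v) (vscale b2 w)"
  shows "sigma_vec v' \<and> sigma_vec w' \<and> Fq_indep v' w' \<and> line_pts v' w' = line_pts v w"
proof -
  define d where "d = a1 * b2 + a2 * b1"
  have d: "d \<noteq> 0" "d \<in> Fq" using assms by (simp_all add: d_def Fq_add Fq_mult)
  have W: "sigma_vec v'" "sigma_vec w'" using sigma_vec_lincomb assms by auto
  have I: "Fq_indep v' w'" unfolding Fq_indep_def
  proof (intro allI impI)
    fix s t assume "s \<in> Fq" "t \<in> Fq" "vadd (vscale s v') (vscale t w') = (\<lambda>_. 0)"
    hence "s * a1 + t * a2 = 0 \<and> s * b1 + t * b2 = 0"
      using Fq_indepD[OF assms(1-3)] unfolding v'_def w'_def vadd_lincomb by blast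
    thus "s = 0 \<and> t = 0" using det_nonzero_imp assms(8) by blast
  qed
  have "(b2 / d) * a1 + (b1 / d) * a2 = (a1 * b2 + a2 * b1) / d"
    and "(a2 / d) * b1 + (a1 / d) * b2 = (a1 * b2 + a2 * b1) / d"
    by (simp_all add: add_divide_distrib algebra_simps)
  hence "(b2 / d) * a1 + (b1 / d) * a2 = 1" "(a2 / d) * b1 + (a1 / d) * b2 = 1"
    using d(1) by (simp_all add: d_def)
  moreover have "(b2 / d) * b1 + (b1 / d) * b2 = 0" "(a2 / d) * a1 + (a1 / d) * a2 = 0"
    by (simp_all add: algebra_simps char2_simps)
  ultimately have v: "v = vadd (vscale (b2 / d) v') (vscale (b1 / d) w')"
    and w: "w = vadd (vscale (a2 / d) v') (vscale (a1 / d) w')"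
    unfolding v'_def w'_def vadd_lincomb by simp_all
  have "(b2 / d) * (a1 / d) + (a2 / d) * (b1 / d) = (b2 * a1 + a2 * b1) / (d * d)"
    by (simp add: add_divide_distrib)
  hence det: "(b2 / d) * (a1 / d) + (a2 / d) * (b1 / d) \<noteq> 0" using d(1) by (simp add: d_def mult.commute)
  have "Fq_span v w \<subseteq> Fq_span v' w'"
    by (subst v, subst w, intro Fq_span_lincomb_subset[OF _ _ _ _ det]) (use assms d in \<open>simp_all add: Fq_divide\<close>)
  moreover have "Fq_span v' w' \<subseteq> Fq_span v w"
    unfolding v'_def w'_def by (rule Fq_span_lincomb_subset[OF assms(4-8)])
  ultimately show ?thesis using W I by (simp add: line_pts_eq_Fq_span)
qed

lemma W_line_line_pts:
  assumes "W_line q \<omega> L"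
  obtains v w where "sigma_vec v" "sigma_vec w" "Fq_indep v w" "L = line_pts v w"
proof -
  obtain v w where v: "sigma_vec v" "v \<noteq> (\<lambda>_. 0)" and w: "sigma_vec w" "w \<noteq> (\<lambda>_. 0)"
    and ne: "pt v \<noteq> pt w" and L: "L = Sigma q \<inter> pgline (pt v) (pt w)"
    using assms unfolding W_line_def sigma_line_def Sigma_eq by blast
  have "Fq_indep v w" unfolding Fq_indep_def
  proof (intro allI impI)
    fix s t assume st: "s \<in> Fq" "t \<in> Fq" "vadd (vscale s v) (vscale t w) = (\<lambda>_. 0)"
    show "s = 0 \<and> t = 0"
    proof (cases "s = 0")
      case True
      thus ?thesis using st(3) w(2) by (simp add: vscale_eq_0_iff)
    next
      case False
      hence v': "v = vscale (- t / s) w" using vadd_eq_0_imp[OF st(3)] by blast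
      hence "- t / s \<noteq> 0" using v(2) False by auto
      hence "pt v = pt w" using v' pt_vscale by metis
      thus ?thesis using ne by simp
    qed
  qed
  thus ?thesis using that v(1) w(1) L Sigma_Int_pgline by blast
qed

lemma line_pts_normal_form:
  assumes "sigma_vec v" "sigma_vec w" "Fq_indep v w"
  obtains v' w' where "sigma_vec v'" "sigma_vec w'" "Fq_indep v' w'" "line_pts v' w' = line_pts v w"
    "w' 6 = 0" "v' 6 = 0 \<or> v' 6 = 1"
proof -
  have f: "v 6 \<in> Fq" "w 6 \<in> Fq" using assms by (auto simp: sigma_vec_def)
  consider "w 6 = 0" "v 6 = 0" | "w 6 = 0" "v 6 \<noteq> 0" | "w 6 \<noteq> 0" by blast
  thus ?thesis
  proof cases
    case 1 thus ?thesis using that assms by blast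
  next
    case 2
    let ?v = "vadd (vscale (1 / v 6) v) (vscale 0 w)" and ?w = "vadd (vscale 0 v) (vscale 1 w)"
    have "?v 6 = 1" "?w 6 = 0" using 2 by (simp_all add: vadd_def vscale_def)
    moreover have "sigma_vec ?v \<and> sigma_vec ?w \<and> Fq_indep ?v ?w \<and> line_pts ?v ?w = line_pts v w"
      using f 2 by (intro line_pts_base_change[OF assms]) (simp_all add: Fq_divide)
    ultimately show ?thesis using that by blast
  next
    case 3
    let ?v = "vadd (vscale 0 v) (vscale (1 / w 6) w)" and ?w = "vadd (vscale 1 v) (vscale (v 6 / w 6) w)"
    have "?v 6 = 1" "?w 6 = 0" using 3 by (simp_all add: vadd_def vscale_def add_self_char2)
    moreover have "sigma_vec ?v \<and> sigma_vec ?w \<and> Fq_indep ?v ?w \<and> line_pts ?v ?w = line_pts v w"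
      using f 3 by (intro line_pts_base_change[OF assms]) (simp_all add: Fq_divide)
    ultimately show ?thesis using that by blast
  qed
qed

lemma W_line_normal_form:
  assumes "W_line q \<omega> L"
  obtains v w where "sigma_vec v" "sigma_vec w" "Fq_indep v w" "L = line_pts v w"
    "w 6 = 0" "v 6 = 0 \<or> v 6 = 1" "hform q \<omega> v w = 0"
proof -
  obtain v w where "sigma_vec v" "sigma_vec w" "Fq_indep v w" "L = line_pts v w"
    "w 6 = 0" "v 6 = 0 \<or> v 6 = 1"
    using W_line_line_pts[OF assms] line_pts_normal_form by metis
  moreover from calculation(4) have "pt v \<in> L" "pt w \<in> L"
    unfolding line_pts_def by (force intro: exI[of _ 0], blast)
  hence "hform q \<omega> v w = 0"
    using assms perp_pt_iff unfolding W_line_def by blast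
  ultimately show ?thesis using that by blast
qed

lemma pt_lincomb_eq:
  assumes "sigma_vec v" "sigma_vec w" "Fq_indep v w" "a \<noteq> 0 \<or> b \<noteq> 0"
    and "pt (vadd (vscale a v) (vscale b w)) = pt (vadd (vscale a' v) (vscale b' w))"
  obtains k where "a' = k * a" "b' = k * b"
proof -
  have "vadd (vscale a v) (vscale b w) \<noteq> (\<lambda>_. 0)" using Fq_indepD[OF assms(1-3)] assms(4) by blast
  then obtain k where "vadd (vscale a' v) (vscale b' w) = vscale k (vadd (vscale a v) (vscale b w))"
    using pt_eq_iff assms(5) by blast
  hence eq: "a' * v i + b' * w i = k * (a * v i + b * w i)" for i
    by (simp add: vadd_def vscale_def fun_eq_iff)
  have "(a' + k * a) * v i + (b' + k * b) * w i = 0" for i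
  proof -
    have "(a' + k * a) * v i + (b' + k * b) * w i = (a' * v i + b' * w i) + k * (a * v i + b * w i)"
      by (simp add: algebra_simps)
    thus ?thesis using eq[of i] add_self_char2 by simp
  qed
  hence "vadd (vscale (a' + k * a) v) (vscale (b' + k * b) w) = (\<lambda>_. 0)"
    by (simp add: vadd_def vscale_def fun_eq_iff)
  hence "a' + k * a = 0" "b' + k * b = 0" using Fq_indepD[OF assms(1-3)] by blast+
  thus ?thesis using that eq_iff_add_eq_0 by blast
qed

lemma card_line_pts:
  assumes "sigma_vec v" "sigma_vec w" "Fq_indep v w"
  shows "inj_on (\<lambda>t. pt (vadd v (vscale t w))) Fq"
    and "t \<in> Fq \<Longrightarrow> pt (vadd v (vscale t w)) \<noteq> pt w"
    and "card (line_pts v w) = q + 1"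
proof -
  note eq = pt_lincomb_eq[OF assms]
  show inj: "inj_on (\<lambda>t. pt (vadd v (vscale t w))) Fq"
  proof (rule inj_onI)
    fix t t' assume "pt (vadd v (vscale t w)) = pt (vadd v (vscale t' w))"
    then obtain k where "1 = k * 1" "t' = k * t" using eq[of 1 t 1 t'] by auto
    thus "t = t'" by simp
  qed
  have ne: "pt (vadd v (vscale s w)) \<noteq> pt w" for s
    using eq[of 1 s 0 1] by auto
  thus "t \<in> Fq \<Longrightarrow> pt (vadd v (vscale t w)) \<noteq> pt w" .
  have "line_pts v w = (\<lambda>t. pt (vadd v (vscale t w))) ` Fq \<union> {pt w}" by (auto simp: line_pts_def)
  moreover have "pt w \<notin> (\<lambda>t. pt (vadd v (vscale t w))) ` Fq" using ne by auto
  ultimately show "card (line_pts v w) = q + 1" using card_image[OF inj] card_Fq by simp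
qed

section \<open>Quadratic equations over \<open>F\<^sub>q\<close>\<close>

definition norm_\<omega> :: 'a where "norm_\<omega> = \<omega>^(q+1)"

lemma norm_\<omega>_eq: "norm_\<omega> = \<omega> * \<omega>^q"
  by (simp add: norm_\<omega>_def)

lemma norm_\<omega>_eq_square: "norm_\<omega> = \<omega> + \<omega>^2"
  by (simp add: norm_\<omega>_eq \<omega>_power_q algebra_simps power2_eq_square)

lemma norm_\<omega>_nonzero: "norm_\<omega> \<noteq> 0"
  using \<omega>_nonzero by (simp add: norm_\<omega>_eq)

lemma norm_\<omega>_in_Fq: "norm_\<omega> \<in> Fq"
  by (simp add: Fq_iff norm_\<omega>_eq power_mult_distrib mult.commute)

lemma inverse_norm_\<omega>_in_Fq: "1 / norm_\<omega> \<in> Fq"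
  using norm_\<omega>_in_Fq Fq_divide one_in_Fq by blast

lemma trace_quadratic:
  assumes "s \<in> Fq"
  shows "trace (\<omega>^2 * s^2 + \<omega> * s + K) = s^2 + s + trace K"
  using trace_mult_Fq[OF Fq_power[OF assms, of 2], of "\<omega>^2"] trace_mult_Fq[OF assms, of \<omega>]
  by (simp add: trace_add trace_\<omega>_square trace_\<omega>_eq_1 mult.commute)

lemma trace_\<omega>_quadratic:
  assumes "s \<in> Fq"
  shows "trace (\<omega>^q * (\<omega>^2 * s^2 + \<omega> * s + K)) = norm_\<omega> * s^2 + trace (\<omega>^q * K)"
proof -
  have "\<omega>^q * (\<omega>^2 * s^2 + \<omega> * s + K) = (s^2 * norm_\<omega>) * \<omega> + s * norm_\<omega> + \<omega>^q * K"
    unfolding norm_\<omega>_eq by (simp add: algebra_simps power2_eq_square)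
  moreover have "s^2 * norm_\<omega> \<in> Fq" "s * norm_\<omega> \<in> Fq"
    using assms norm_\<omega>_in_Fq by (simp_all add: Fq_mult Fq_power)
  ultimately show ?thesis by (simp add: trace_add trace_mult_Fq trace_Fq trace_\<omega>_eq_1)
qed

text \<open>An \<open>F\<^sub>q\<close>-root of \<open>\<omega>\<^sup>2 s\<^sup>2 + \<omega> s + K\<close> is determined by the two \<open>F\<^sub>q\<close>-linear conditions obtained by
  taking the traces of the equation and of its product with \<open>\<omega>\<^sup>q\<close>.\<close>

lemma quadratic_root_iff_traces:
  assumes s: "s \<in> Fq"
  shows "\<omega>^2 * s^2 + \<omega> * s + K = 0 \<longleftrightarrow> s = trace (\<omega>^q * K / \<omega>) \<and> s^2 = trace (K / \<omega>)"
proof -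
  have k1: "trace (K / \<omega>) = (1 / norm_\<omega>) * trace (\<omega>^q * K)"
  proof -
    have "K / \<omega> = (1 / norm_\<omega>) * (\<omega>^q * K)"
      unfolding norm_\<omega>_eq using \<omega>_nonzero by (simp add: field_simps)
    thus ?thesis using trace_mult_Fq[OF inverse_norm_\<omega>_in_Fq] by simp
  qed
  have k2: "trace (\<omega>^q * K / \<omega>) = trace K + trace (K / \<omega>)"
  proof -
    have "\<omega>^q * K / \<omega> = K + K / \<omega>" using \<omega>_nonzero by (simp add: \<omega>_power_q field_simps)
    thus ?thesis by (simp add: trace_add)
  qed
  have "\<omega>^2 * s^2 + \<omega> * s + K = 0 \<longleftrightarrow> s^2 + s + trace K = 0 \<and> norm_\<omega> * s^2 + trace (\<omega>^q * K) = 0"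
    using eq_0_iff_traces[of "\<omega>^2 * s^2 + \<omega> * s + K"] trace_quadratic[OF s] trace_\<omega>_quadratic[OF s]
    by simp
  also have "norm_\<omega> * s^2 + trace (\<omega>^q * K) = 0 \<longleftrightarrow> norm_\<omega> * s^2 = trace (\<omega>^q * K)"
    by (rule eq_iff_add_eq_0[symmetric])
  also have "\<dots> \<longleftrightarrow> s^2 = trace (K / \<omega>)"
    unfolding k1 using norm_\<omega>_nonzero by (auto simp: field_simps)
  also have "s^2 + s + trace K = 0 \<longleftrightarrow> s = trace K + s^2"
    by (metis eq_iff_add_eq_0 add.commute add.assoc)
  finally show ?thesis using k2 by auto
qed

lemma exists_Fq_root_iff:
  "(trace (\<omega>^q * K / \<omega>))^2 + trace (K / \<omega>) = 0 \<longleftrightarrow> (\<exists>s\<in>Fq. \<omega>^2 * s^2 + \<omega> * s + K = 0)"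
proof
  assume "(trace (\<omega>^q * K / \<omega>))^2 + trace (K / \<omega>) = 0"
  hence "(trace (\<omega>^q * K / \<omega>))^2 = trace (K / \<omega>)" by (subst eq_iff_add_eq_0)
  thus "\<exists>s\<in>Fq. \<omega>^2 * s^2 + \<omega> * s + K = 0"
    using quadratic_root_iff_traces[OF trace_in_Fq] trace_in_Fq by blast
next
  assume "\<exists>s\<in>Fq. \<omega>^2 * s^2 + \<omega> * s + K = 0"
  thus "(trace (\<omega>^q * K / \<omega>))^2 + trace (K / \<omega>) = 0"
    using quadratic_root_iff_traces add_self_char2 by metis
qed

section \<open>The quadric \<open>Q\<close> and the spread\<close>

definition Qform :: "(nat \<Rightarrow> 'a) \<Rightarrow> 'a" where
  "Qform v = (v 3)^2 + v 1 * v 5 + v 2 * v 4"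

lemma Qform_vscale: "Qform (vscale c v) = c^2 * Qform v"
  by (simp add: Qform_def vscale_def algebra_simps power2_eq_square)

lemma pt_in_Qset_iff:
  assumes "sigma_vec v" "v \<noteq> (\<lambda>_. 0)"
  shows "pt v \<in> Qset q \<longleftrightarrow> v 6 = 0 \<and> Qform v = 0"
proof -
  have "pt v \<in> Sigma q" using assms unfolding Sigma_eq by blast
  hence "pt v \<in> Qset q \<longleftrightarrow> (\<exists>c. c \<noteq> 0 \<and> vscale c v 6 = 0 \<and> Qform (vscale c v) = 0)"
    unfolding Qset_def Qform_def pt_eq_vscale by blast
  also have "\<dots> \<longleftrightarrow> v 6 = 0 \<and> Qform v = 0"
    unfolding Qform_vscale by (auto simp: vscale_def intro: exI[of _ 1])
  finally show ?thesis .
qed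

text \<open>The points \<open>pt (Z l)\<close>, \<open>l \<noteq> 0\<close>, of such a parametrisation by \<open>F\<^sub>q\<^sub>2\<close> form a line of \<open>\<Sigma>\<close>;
  the spread lines are given this way.\<close>

definition sigma_param :: "('a \<Rightarrow> nat \<Rightarrow> 'a) \<Rightarrow> bool" where
  "sigma_param Z \<longleftrightarrow> (\<forall>s\<in>Fq. \<forall>r\<in>Fq. Z (s + r * \<omega>) = vadd (vscale s (Z 1)) (vscale r (Z \<omega>)))
     \<and> (\<forall>l. sigma_vec (Z l)) \<and> (\<forall>l. l \<noteq> 0 \<longrightarrow> Z l \<noteq> (\<lambda>_. 0))"

lemma sigma_paramD:
  assumes "sigma_param Z"
  shows "s \<in> Fq \<Longrightarrow> r \<in> Fq \<Longrightarrow> Z (s + r * \<omega>) = vadd (vscale s (Z 1)) (vscale r (Z \<omega>))"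
    and "sigma_vec (Z l)" and "l \<noteq> 0 \<Longrightarrow> Z l \<noteq> (\<lambda>_. 0)"
  using assms unfolding sigma_param_def by blast+

lemma sigma_param_Fq_indep:
  assumes "sigma_param Z"
  shows "Fq_indep (Z 1) (Z \<omega>)"
  unfolding Fq_indep_def
proof (intro allI impI)
  fix s r assume sr: "s \<in> Fq" "r \<in> Fq" "vadd (vscale s (Z 1)) (vscale r (Z \<omega>)) = (\<lambda>_. 0)"
  hence "Z (s + r * \<omega>) = (\<lambda>_. 0)" using sigma_paramD(1)[OF assms] by simp
  hence "s + r * \<omega> = 0" using sigma_paramD(3)[OF assms] by blast
  thus "s = 0 \<and> r = 0" using Fq_\<omega>_independent sr by blast
qed

lemma sigma_param_eq_line_pts:
  assumes "sigma_param Z"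
  shows "{pt (Z l) | l. l \<noteq> 0} = line_pts (Z 1) (Z \<omega>)"
  unfolding line_pts_eq_Fq_span
proof (intro Set.set_eqI iffI)
  note lin = sigma_paramD(1)[OF assms]
  {
    fix X assume "X \<in> {pt (Z l) | l. l \<noteq> 0}"
    then obtain l where l: "l \<noteq> 0" "X = pt (Z l)" by blast
    define s r where "s = trace (\<omega>^q * l)" and "r = trace l"
    have sr: "s \<in> Fq" "r \<in> Fq" "l = s + r * \<omega>"
      unfolding s_def r_def by (simp_all add: trace_in_Fq flip: Fq_\<omega>_decomposition)
    moreover have "s \<noteq> 0 \<or> r \<noteq> 0" using sr(3) l(1) by auto
    ultimately show "X \<in> Fq_span (Z 1) (Z \<omega>)" unfolding Fq_span_def using l lin by auto
  next
    fix X assume "X \<in> Fq_span (Z 1) (Z \<omega>)"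
    then obtain s r where sr: "s \<in> Fq" "r \<in> Fq" "s \<noteq> 0 \<or> r \<noteq> 0"
      "X = pt (vadd (vscale s (Z 1)) (vscale r (Z \<omega>)))"
      unfolding Fq_span_def by blast
    hence "X = pt (Z (s + r * \<omega>))" using lin by simp
    moreover have "s + r * \<omega> \<noteq> 0" using Fq_\<omega>_independent sr by blast
    ultimately show "X \<in> {pt (Z l) | l. l \<noteq> 0}" by blast
  }
qed

lemma card_sigma_param:
  assumes "sigma_param Z"
  shows "card {pt (Z l) | l. l \<noteq> 0} = q + 1"
  using card_line_pts(3)[OF sigma_paramD(2,2)[OF assms] sigma_param_Fq_indep[OF assms]]
    sigma_param_eq_line_pts[OF assms] by simp

lemma sigma_param_W_line:
  assumes "sigma_param Z" and "\<And>l l'. hform q \<omega> (Z l) (Z l') = 0"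
  shows "W_line q \<omega> {pt (Z l) | l. l \<noteq> 0}"
  unfolding W_line_def sigma_line_def
proof (intro conjI ballI)
  have W: "sigma_vec (Z 1)" "sigma_vec (Z \<omega>)" and I: "Fq_indep (Z 1) (Z \<omega>)"
    using sigma_paramD(2)[OF assms(1)] sigma_param_Fq_indep[OF assms(1)] by auto
  have P: "pt (Z 1) \<in> Sigma q" "pt (Z \<omega>) \<in> Sigma q"
    using W Fq_indep_nonzero[OF I] unfolding Sigma_eq by auto
  have "pt (Z 1) \<noteq> pt (Z \<omega>)"
  proof
    assume "pt (Z 1) = pt (Z \<omega>)"
    then obtain k where "k \<in> Fq" "Z \<omega> = vscale k (Z 1)"
      using pt_eq_iff_sigma[OF W] Fq_indep_nonzero[OF I] by auto
    hence "vadd (vscale k (Z 1)) (vscale 1 (Z \<omega>)) = (\<lambda>_. 0)"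
      by (simp add: vadd_def vscale_def fun_eq_iff add_self_char2)
    hence "k = 0 \<and> (1::'a) = 0" using I \<open>k \<in> Fq\<close> one_in_Fq unfolding Fq_indep_def by blast
    thus False by simp
  qed
  thus "\<exists>P\<in>Sigma q. \<exists>R\<in>Sigma q. P \<noteq> R \<and> {pt (Z l) | l. l \<noteq> 0} = Sigma q \<inter> pgline P R"
    using P Sigma_Int_pgline[OF W I] sigma_param_eq_line_pts[OF assms(1)] by blast
next
  fix X Y assume "X \<in> {pt (Z l) | l. l \<noteq> 0}" "Y \<in> {pt (Z l) | l. l \<noteq> 0}"
  then obtain l l' where "X = pt (Z l)" "Y = pt (Z l')" by blast
  thus "perp q \<omega> X Y" by (simp add: perp_pt_iff assms(2))
qed

definition spread_vec :: "'a \<Rightarrow> 'a \<Rightarrow> nat \<Rightarrow> 'a" where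
  "spread_vec t l = vec6 l (l^q) (l * t + l^q * t^q) (l^q * t^(2*q)) (l * t^2) 0"

definition spread_vec_inf :: "'a \<Rightarrow> nat \<Rightarrow> 'a" where
  "spread_vec_inf l = vec6 0 0 0 (l^q) l 0"

lemma S_line_eq: "S_line q t = {pt (spread_vec t l) | l. l \<noteq> 0}"
  unfolding S_line_def spread_vec_def ..

lemma S_inf_eq: "S_inf q = {pt (spread_vec_inf l) | l. l \<noteq> 0}"
  unfolding S_inf_def spread_vec_inf_def ..

lemma sigma_param_spread_vec: "sigma_param (spread_vec t)"
  unfolding sigma_param_def
proof (intro conjI ballI allI impI)
  fix s r assume "s \<in> Fq" "r \<in> Fq"
  thus "spread_vec t (s + r * \<omega>) = vadd (vscale s (spread_vec t 1)) (vscale r (spread_vec t \<omega>))"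
    unfolding spread_vec_def vscale_vec6 vadd_vec6 by (simp add: Fq_iff frobenius_simps algebra_simps)
next
  fix l
  have "(l^q * t^(2*q))^q = l * t^2"
    by (simp add: power_mult_distrib flip: power_mult) (simp add: power_mult mult.commute power_q_q)
  moreover have "l * t + l^q * t^q \<in> Fq" using trace_in_Fq[of "l * t"] by (simp add: trace_def power_mult_distrib)
  ultimately show "sigma_vec (spread_vec t l)"
    unfolding spread_vec_def sigma_vec_def using q_ge_2 by (auto simp: vec6_out)
qed (simp add: spread_vec_def vec6_eq_0_iff)

lemma sigma_param_spread_vec_inf: "sigma_param spread_vec_inf"
  unfolding sigma_param_def spread_vec_inf_def using q_ge_2
  by (auto simp: Fq_iff vscale_vec6 vadd_vec6 frobenius_simps sigma_vec_def vec6_out vec6_eq_0_iff)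

lemma hform_spread_vec: "hform q \<omega> (spread_vec t l) (spread_vec t l') = 0"
  unfolding spread_vec_def hform_def using q_ge_2
  by (simp add: frobenius_simps zero_power algebra_simps power_q_q power_q_q_mult char2_simps flip: power_mult)

lemma hform_spread_vec_inf: "hform q \<omega> (spread_vec_inf l) (spread_vec_inf l') = 0"
  unfolding spread_vec_inf_def hform_def using q_ge_2 by (simp add: zero_power)

lemma pt_spread_vec_in_Qset:
  assumes "l \<noteq> 0"
  shows "pt (spread_vec t l) \<in> Qset q"
proof -
  have "Qform (spread_vec t l) = 0"
    unfolding spread_vec_def Qform_def by (simp add: power_mult algebra_simps power2_eq_square char2_simps)
  thus ?thesis using pt_in_Qset_iff sigma_paramD(2,3)[OF sigma_param_spread_vec] assms
    by (simp add: spread_vec_def)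
qed

lemma pt_spread_vec_inf_in_Qset: "l \<noteq> 0 \<Longrightarrow> pt (spread_vec_inf l) \<in> Qset q"
  using pt_in_Qset_iff sigma_paramD(2,3)[OF sigma_param_spread_vec_inf]
  by (simp add: spread_vec_inf_def Qform_def)

lemma spread_W_line_in_Qset:
  assumes "L \<in> spread q"
  shows "W_line q \<omega> L \<and> L \<subseteq> Qset q"
proof -
  consider t where "L = {pt (spread_vec t l) | l. l \<noteq> 0}" | "L = {pt (spread_vec_inf l) | l. l \<noteq> 0}"
    using assms unfolding spread_def S_line_eq S_inf_eq by blast
  thus ?thesis
  proof cases
    case 1
    thus ?thesis using sigma_param_W_line[OF sigma_param_spread_vec hform_spread_vec]
        pt_spread_vec_in_Qset by auto
  next
    case 2
    thus ?thesis using sigma_param_W_line[OF sigma_param_spread_vec_inf hform_spread_vec_inf]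
        pt_spread_vec_inf_in_Qset by auto
  qed
qed

lemma card_S_line: "card (S_line q (t::'a)) = q + 1"
  unfolding S_line_eq by (rule card_sigma_param[OF sigma_param_spread_vec])

lemma card_S_inf: "card (S_inf q :: (nat \<Rightarrow> 'a) set set) = q + 1"
  unfolding S_inf_eq by (rule card_sigma_param[OF sigma_param_spread_vec_inf])

lemma inj_S_line: "inj (S_line q :: 'a \<Rightarrow> _)"
proof (rule injI)
  fix t t' :: 'a assume eq: "S_line q t = S_line q t'"
  have "pt (spread_vec t 1) \<in> S_line q t" unfolding S_line_eq by auto
  then obtain l where "l \<noteq> 0" "pt (spread_vec t 1) = pt (spread_vec t' l)"
    unfolding eq unfolding S_line_eq by auto
  then obtain c where "spread_vec t' l = vscale c (spread_vec t 1)"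
    using pt_eq_iff[OF sigma_paramD(3)[OF sigma_param_spread_vec, of 1]] by auto
  hence "l = c" "l * t'^2 = c * t^2" unfolding spread_vec_def vscale_vec6 vec6_eq_iff by auto
  thus "t = t'" using \<open>l \<noteq> 0\<close> by (simp add: square_eq_iff)
qed

lemma S_inf_notin_range_S_line: "S_inf q \<notin> range (S_line q :: 'a \<Rightarrow> _)"
proof
  assume "S_inf q \<in> range (S_line q :: 'a \<Rightarrow> _)"
  then obtain t :: 'a where eq: "S_inf q = S_line q t" by blast
  have "pt (spread_vec_inf 1) \<in> S_inf q" unfolding S_inf_eq by auto
  then obtain l where "l \<noteq> 0" "pt (spread_vec_inf 1) = pt (spread_vec t l)"
    unfolding eq S_line_eq by auto
  then obtain c where "spread_vec t l = vscale c (spread_vec_inf 1)"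
    using pt_eq_iff[OF sigma_paramD(3)[OF sigma_param_spread_vec_inf, of 1]] by auto
  hence "l = 0" unfolding spread_vec_def spread_vec_inf_def vscale_vec6 vec6_eq_iff by auto
  thus False using \<open>l \<noteq> 0\<close> by simp
qed

lemma card_spread: "card (spread q :: (nat \<Rightarrow> 'a) set set set) = q^2 + 1"
proof -
  have "card (range (S_line q :: 'a \<Rightarrow> _)) = q^2" using card_image[OF inj_S_line] card_field by simp
  thus ?thesis using S_inf_notin_range_S_line unfolding spread_def by simp
qed

definition Qpolar :: "(nat \<Rightarrow> 'a) \<Rightarrow> (nat \<Rightarrow> 'a) \<Rightarrow> 'a" where
  "Qpolar v w = v 1 * w 5 + w 1 * v 5 + v 2 * w 4 + w 2 * v 4"

definition cross15 :: "(nat \<Rightarrow> 'a) \<Rightarrow> (nat \<Rightarrow> 'a) \<Rightarrow> 'a" where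
  "cross15 z u = z 1 * u 5 + u 1 * z 5"

lemma Qform_lincomb:
  "Qform (vadd (vscale a v) (vscale b w)) = a^2 * Qform v + a * b * Qpolar v w + b^2 * Qform w"
  unfolding Qform_def Qpolar_def vadd_def vscale_def
  by (simp add: algebra_simps power2_eq_square char2_simps)

lemma cross15_lincomb:
  "cross15 (vadd (vscale a v) (vscale b w)) u = a * cross15 v u + b * cross15 w u"
  unfolding cross15_def vadd_def vscale_def by (simp add: algebra_simps)

lemma cross15_self: "cross15 u u = 0"
  unfolding cross15_def by (simp add: mult.commute add_self_char2)

lemma cross15_commute: "cross15 z u = cross15 u z"
  unfolding cross15_def by (simp add: algebra_simps)

text \<open>On \<open>X\<^sub>6 = 0\<close> the symplectic form and the polar form of \<open>Q\<close> are \<open>trace (\<omega> X)\<close> and \<open>trace X\<close> for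
  \<open>X = cross15 v w\<close>, so both vanish only if \<open>X = 0\<close>.\<close>

lemma cross15_eq_0:
  assumes "sigma_vec v" "sigma_vec w" "v 6 = 0" "w 6 = 0" "Qpolar v w = 0" "hform q \<omega> v w = 0"
  shows "cross15 v w = 0"
proof -
  obtain a d b f where v: "v = vec6 a (a^q) d b (b^q) f" using assms(1) sigma_vecE by metis
  obtain a' d' b' f' where w: "w = vec6 a' (a'^q) d' b' (b'^q) f'" using assms(2) sigma_vecE by metis
  have f: "f = 0" "f' = 0" using assms(3,4) v w by simp_all
  have X: "cross15 v w = a * b'^q + a' * b^q" unfolding cross15_def v w by simp
  have "Qpolar v w = trace (cross15 v w)" unfolding Qpolar_def X trace_def unfolding v w
    by (simp add: frobenius_simps algebra_simps)
  hence "cross15 v w \<in> Fq" using assms(5) by (simp add: trace_eq_0_iff)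
  moreover have "hform q \<omega> v w = trace (\<omega> * cross15 v w)"
    unfolding hform_def X trace_def unfolding v w f using q_ge_2 by (simp add: frobenius_simps algebra_simps zero_power)
  ultimately show ?thesis
    using assms(6) trace_mult_Fq[of "cross15 v w" \<omega>] trace_\<omega>_eq_1 by (simp add: mult.commute)
qed

lemma pt_in_S_line:
  assumes "sigma_vec z" "z \<noteq> (\<lambda>_. 0)" "z 6 = 0" "Qform z = 0" "z 5 = z 1 * \<tau>^2"
  shows "pt z \<in> S_line q \<tau>"
proof -
  obtain a d b f where z: "z = vec6 a (a^q) d b (b^q) f" using assms(1) sigma_vecE by metis
  have f: "f = 0" and b5: "b^q = a * \<tau>^2" using assms(3,5) z by simp_all
  have b4: "b = a^q * \<tau>^(2*q)"
    using arg_cong[OF b5, of "\<lambda>x. x^q"] by (simp add: power_mult_distrib power_q_q flip: power_mult)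
  have "d^2 + (a * b^q + a^q * b) = 0" using assms(4) z unfolding Qform_def by (simp add: add.assoc mult.commute)
  hence "d^2 = a * b^q + a^q * b" by (metis eq_iff_add_eq_0)
  also have "\<dots> = (a * \<tau> + a^q * \<tau>^q)^2"
    unfolding b5 b4 by (simp add: power_mult algebra_simps power2_eq_square char2_simps)
  finally have d: "d = a * \<tau> + a^q * \<tau>^q" by (simp add: square_eq_iff)
  have "a \<noteq> 0" using assms(2) z f b4 d q_ge_2 by (auto simp: vec6_eq_0_iff)
  moreover have "z = spread_vec \<tau> a" unfolding spread_vec_def z f b4 d using b5 b4 by simp
  ultimately show ?thesis unfolding S_line_eq by blast
qed

lemma pt_in_S_inf:
  assumes "sigma_vec z" "z \<noteq> (\<lambda>_. 0)" "z 6 = 0" "Qform z = 0" "z 1 = 0"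
  shows "pt z \<in> S_inf q"
proof -
  obtain a d b f where z: "z = vec6 a (a^q) d b (b^q) f" using assms(1) sigma_vecE by metis
  have af: "a = 0" "f = 0" using assms(3,5) z by auto
  hence "d = 0" using assms(4) z q_ge_2 unfolding Qform_def by (simp add: zero_power)
  hence "b \<noteq> 0" "z = spread_vec_inf (b^q)"
    using assms(2) z af q_ge_2 by (auto simp: vec6_eq_0_iff spread_vec_inf_def zero_power)
  thus ?thesis unfolding S_inf_eq by auto
qed

lemma singular_line_pts:
  assumes "sigma_vec v" "sigma_vec w" "Fq_indep v w" "v 6 = 0" "w 6 = 0"
    and "Qform v = 0" "Qform w = 0" "Qpolar v w = 0" "X \<in> line_pts v w"
  obtains z a b where "X = pt z" "sigma_vec z" "z \<noteq> (\<lambda>_. 0)" "z 6 = 0" "Qform z = 0"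
    "z 1 = a * v 1 + b * w 1" "\<And>u. cross15 z u = a * cross15 v u + b * cross15 w u"
proof -
  obtain a b where "a \<in> Fq" "b \<in> Fq" "a \<noteq> 0 \<or> b \<noteq> 0" "X = pt (vadd (vscale a v) (vscale b w))"
    using assms(9) unfolding line_pts_eq_Fq_span Fq_span_def by blast
  moreover have "vadd (vscale a v) (vscale b w) \<noteq> (\<lambda>_. 0)"
    using Fq_indepD[OF assms(1-3)] calculation(3) by blast
  moreover have "vadd (vscale a v) (vscale b w) 6 = 0" "vadd (vscale a v) (vscale b w) 1 = a * v 1 + b * w 1"
    using assms(4,5) by (simp_all add: vadd_def vscale_def)
  ultimately show ?thesis
    using that sigma_vec_lincomb[OF assms(1,2)] assms(6-8) by (simp add: Qform_lincomb cross15_lincomb)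
qed

text \<open>The ratio \<open>X\<^sub>5 / X\<^sub>1\<close> is constant along such a line, and equals \<open>\<tau>\<^sup>2\<close> on \<open>S\<^sub>\<tau>\<close>.\<close>

lemma singular_line_in_spread:
  assumes Wv: "sigma_vec v" and Ww: "sigma_vec w" and I: "Fq_indep v w" and "v 6 = 0" "w 6 = 0"
    and "Qform v = 0" "Qform w = 0" "Qpolar v w = 0" "hform q \<omega> v w = 0"
  shows "line_pts v w \<in> spread q"
proof -
  note pts = singular_line_pts[OF assms(1-8)]
  have cardL: "card (line_pts v w) = q + 1" using card_line_pts(3)[OF Wv Ww I] .
  have finite: "finite (S_inf q :: (nat \<Rightarrow> 'a) set set)" "finite (S_line q (\<tau>::'a))" for \<tau>
    using card_S_inf card_S_line by (simp_all add: card_ge_0_finite)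
  show ?thesis
  proof (cases "v 1 = 0 \<and> w 1 = 0")
    case True
    have "line_pts v w \<subseteq> S_inf q"
    proof
      fix X assume "X \<in> line_pts v w"
      then obtain z a b where "X = pt z" "sigma_vec z" "z \<noteq> (\<lambda>_. 0)" "z 6 = 0" "Qform z = 0"
        "z 1 = a * v 1 + b * w 1" by (rule pts)
      thus "X \<in> S_inf q" using pt_in_S_inf True by simp
    qed
    hence "line_pts v w = S_inf q" using card_subset_eq[OF finite(1)] cardL card_S_inf by simp
    thus ?thesis unfolding spread_def by simp
  next
    case False
    define u where "u = (if v 1 \<noteq> 0 then v else w)"
    have u1: "u 1 \<noteq> 0" and Ru: "cross15 v u = 0" "cross15 w u = 0"
      using False cross15_eq_0[OF Wv Ww assms(4,5,8,9)] cross15_self cross15_commute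
      by (auto simp: u_def)
    obtain \<tau> where \<tau>: "\<tau>^2 = u 5 / u 1" using exists_sqrt by blast
    have "line_pts v w \<subseteq> S_line q \<tau>"
    proof
      fix X assume "X \<in> line_pts v w"
      then obtain z a b where z: "X = pt z" "sigma_vec z" "z \<noteq> (\<lambda>_. 0)" "z 6 = 0" "Qform z = 0"
        "cross15 z u = a * cross15 v u + b * cross15 w u" by (metis pts)
      have "u 1 * z 5 = z 1 * u 5" using z(6) Ru unfolding cross15_def by (metis eq_iff_add_eq_0 add.commute mult_zero_right add_0)
      also have "u 5 = u 1 * \<tau>^2" using u1 \<tau> by simp
      finally have "u 1 * z 5 = u 1 * (z 1 * \<tau>^2)" by (simp add: algebra_simps)
      hence "z 5 = z 1 * \<tau>^2" using u1 by simp
      thus "X \<in> S_line q \<tau>" using pt_in_S_line z(1-5) by simp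
    qed
    hence "line_pts v w = S_line q \<tau>" using card_subset_eq[OF finite(2)] cardL card_S_line by simp
    thus ?thesis unfolding spread_def by simp
  qed
qed

section \<open>Point sets cut out by quadratics on lines\<close>

lemma card_Fq_roots_quadratic_le_2:
  assumes "a \<noteq> 0 \<or> b \<noteq> 0 \<or> c \<noteq> 0"
  shows "(if c = 0 then 1 else 0) + card {t \<in> Fq. c * t^2 + b * t + a = 0} \<le> 2"
proof -
  consider "c \<noteq> 0" | "c = 0" "b \<noteq> 0" | "c = 0" "b = 0" "a \<noteq> 0" using assms by blast
  thus ?thesis
  proof cases
    case 1
    have "card {t \<in> Fq. c * t^2 + b * t + a = 0} \<le> card {t. c * t^2 + b * t + a = 0}"
      by (intro card_mono) auto
    thus ?thesis using 1 card_roots_quadratic_le_2[OF 1, of b a] by simp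
  next
    case 2
    have "card {t \<in> Fq. c * t^2 + b * t + a = 0} \<le> card {t. b * t + a = 0}"
      using 2 by (intro card_mono) auto
    thus ?thesis using 2 card_roots_linear_le_1[OF 2(2), of a] by simp
  next
    case 3 thus ?thesis by simp
  qed
qed

lemma card_line_pts_Int:
  assumes "sigma_vec v" "sigma_vec w" "Fq_indep v w"
  shows "card (line_pts v w \<inter> S) = (if pt w \<in> S then 1 else 0) + card {t \<in> Fq. pt (vadd v (vscale t w)) \<in> S}"
proof -
  let ?f = "\<lambda>t. pt (vadd v (vscale t w))"
  have "line_pts v w \<inter> S = ?f ` {t \<in> Fq. ?f t \<in> S} \<union> (if pt w \<in> S then {pt w} else {})"
    by (auto simp: line_pts_def)
  moreover have "card (?f ` {t \<in> Fq. ?f t \<in> S}) = card {t \<in> Fq. ?f t \<in> S}"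
    by (rule card_image, rule inj_on_subset[OF card_line_pts(1)[OF assms]]) auto
  moreover have "pt w \<notin> ?f ` {t \<in> Fq. ?f t \<in> S}" using card_line_pts(2)[OF assms] by auto
  ultimately show ?thesis by (auto simp: card_insert_if)
qed

lemma line_pts_Int_quadratic:
  assumes "sigma_vec v" "sigma_vec w" "Fq_indep v w"
    and "pt w \<in> S \<longleftrightarrow> c = 0"
    and "\<And>t. t \<in> Fq \<Longrightarrow> pt (vadd v (vscale t w)) \<in> S \<longleftrightarrow> c * t^2 + b * t + a = 0"
  shows "card (line_pts v w \<inter> S) \<in> {0, 1, 2, q + 1}"
    and "line_pts v w \<subseteq> S \<Longrightarrow> a = 0 \<and> b = 0 \<and> c = 0"
proof -
  have n: "card (line_pts v w \<inter> S) = (if c = 0 then 1 else 0) + card {t \<in> Fq. c * t^2 + b * t + a = 0}"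
    unfolding card_line_pts_Int[OF assms(1-3)] assms(4) using assms(5)
    by (metis (no_types, lifting) Collect_cong)
  show "card (line_pts v w \<inter> S) \<in> {0, 1, 2, q + 1}"
  proof (cases "a = 0 \<and> b = 0 \<and> c = 0")
    case True
    thus ?thesis unfolding n using card_Fq by simp
  next
    case False
    hence "card (line_pts v w \<inter> S) \<le> 2" unfolding n using card_Fq_roots_quadratic_le_2 by blast
    hence "card (line_pts v w \<inter> S) = 0 \<or> card (line_pts v w \<inter> S) = 1 \<or> card (line_pts v w \<inter> S) = 2"
      by linarith
    thus ?thesis by blast
  qed
  assume "line_pts v w \<subseteq> S"
  hence "card (line_pts v w \<inter> S) = q + 1" using card_line_pts(3)[OF assms(1-3)] by (simp add: Int_absorb2)
  hence "\<not> card (line_pts v w \<inter> S) \<le> 2" using q_ge_2 by linarith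
  thus "a = 0 \<and> b = 0 \<and> c = 0" unfolding n using card_Fq_roots_quadratic_le_2 by blast
qed

end

section \<open>The orbit of \<open>S\<^sub>\<gamma>\<close>\<close>

locale W5q_orbit = W5q +
  fixes \<gamma> :: 'a
  assumes no_root_\<gamma>: "t^2 + t + \<gamma> \<noteq> 0"
begin

lemma artin_schreier_neq_\<gamma>: "\<Phi>^2 + \<Phi> \<noteq> \<gamma>"
proof
  assume "\<Phi>^2 + \<Phi> = \<gamma>"
  thus False using no_root_\<gamma>[of \<Phi>] add_self_char2[of \<gamma>] by simp
qed

lemma \<gamma>_notin_artin_schreier: "\<gamma> \<notin> range artin_schreier"
  using artin_schreier_neq_\<gamma> by (auto simp: artin_schreier_def)

definition phi :: "'a \<Rightarrow> 'a \<Rightarrow> 'a \<Rightarrow> 'a \<Rightarrow> 'a" where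
  "phi a b c d = \<gamma> * a * b + a * d + c * d"

lemma phi_identity:
  "phi a b c d * (phi a b c d + (a * d + b * c)) = gamma_form \<gamma> a c * gamma_form \<gamma> b d + \<gamma> * (a * d + b * c)^2"
  unfolding phi_def gamma_form_def by (simp add: algebra_simps power2_eq_square char2_simps)

text \<open>Changing the second row by a multiple of the first keeps the determinant and moves \<open>phi\<close> by
  multiples of \<open>A\<close>; then \<open>phi_identity\<close> forces the second value \<open>C\<close>.\<close>

lemma determinant_one_solution:
  assumes "A \<noteq> 0" and "\<Phi>^2 + \<Phi> = A * C + \<gamma>"
  obtains a b c d where "a * d + b * c = 1" "gamma_form \<gamma> a c = A" "gamma_form \<gamma> b d = C" "phi a b c d = \<Phi>"
proof -
  obtain a c where ac: "gamma_form \<gamma> a c = A" using gamma_form_surj[OF CHAR_eq_2 \<gamma>_notin_artin_schreier assms(1)] by blast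
  obtain b0 d0 where bd0: "a * d0 + b0 * c = 1"
  proof (cases "a = 0")
    case True
    hence "c \<noteq> 0" using ac assms(1) by (auto simp: gamma_form_def)
    thus ?thesis using that[of 0 "1 / c"] True by simp
  next
    case False thus ?thesis using that[of "1 / a" 0] by simp
  qed
  define lam where "lam = (\<Phi> + phi a b0 c d0) / A"
  define b d where "b = b0 + lam * a" and "d = d0 + lam * c"
  have ab: "a * d + b * c = 1" unfolding b_def d_def using bd0 by (simp add: algebra_simps char2_simps)
  have "phi a b c d = phi a b0 c d0 + lam * gamma_form \<gamma> a c"
    unfolding phi_def gamma_form_def b_def d_def by (simp add: algebra_simps power2_eq_square)
  also have "lam * gamma_form \<gamma> a c = \<Phi> + phi a b0 c d0" unfolding lam_def ac using assms(1) by simp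
  finally have phi: "phi a b c d = \<Phi>" by (simp add: char2_simps)
  have "A * gamma_form \<gamma> b d + \<gamma> = \<Phi>^2 + \<Phi>"
    using phi_identity[of a b c d] ab phi ac by (simp add: power2_eq_square algebra_simps)
  hence "gamma_form \<gamma> b d = C" using assms by simp
  thus ?thesis using that ab ac phi by blast
qed

definition orbit_x1 :: "'a \<Rightarrow> 'a \<Rightarrow> 'a" where
  "orbit_x1 a c = gamma_form \<gamma> a c / \<omega>"

definition orbit_x5 :: "'a \<Rightarrow> 'a \<Rightarrow> 'a" where
  "orbit_x5 b d = (gamma_form \<gamma> b d + \<omega>^q) / \<omega>"

definition orbit_x3 :: "'a \<Rightarrow> 'a \<Rightarrow> 'a \<Rightarrow> 'a \<Rightarrow> 'a" where
  "orbit_x3 a b c d = trace ((phi a b c d + \<omega>^q * \<gamma>) / \<omega>) + 1 / norm_\<omega>"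

definition orbit_vec :: "'a \<Rightarrow> 'a \<Rightarrow> 'a \<Rightarrow> 'a \<Rightarrow> nat \<Rightarrow> 'a" where
  "orbit_vec a b c d = vec6 (orbit_x1 a c) ((orbit_x1 a c)^q) (orbit_x3 a b c d) ((orbit_x5 b d)^q) (orbit_x5 b d) 1"

lemma M_S_gamma_eq_orbit_vec: "mat_app (Mrows q \<omega> a b c d) (S_gamma q \<omega> \<gamma>) = orbit_vec a b c d"
proof -
  let ?x = "mat_app (Mrows q \<omega> a b c d) (S_gamma q \<omega> \<gamma>)"
  have \<omega>q: "\<omega>^q \<noteq> 0" using \<omega>_nonzero by simp
  note defs = mat_app_def Mrows_def S_gamma_def sum_1_6
  have "?x 1 = orbit_x1 a c"
    unfolding defs orbit_x1_def gamma_form_def using \<omega>_nonzero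
    by (simp, simp add: field_simps, simp add: \<omega>_power_q algebra_simps power2_eq_square char2_simps)
  moreover have "?x 2 = (orbit_x1 a c)^q"
    unfolding defs orbit_x1_def gamma_form_def using \<omega>_nonzero \<omega>q
    by (simp add: frobenius_simps, simp add: field_simps, simp add: \<omega>_power_q algebra_simps power2_eq_square char2_simps)
  moreover have "?x 3 = orbit_x3 a b c d"
    unfolding defs orbit_x3_def phi_def trace_def norm_\<omega>_def using \<omega>_nonzero \<omega>q
    by (simp add: frobenius_simps, simp add: field_simps, simp add: \<omega>_power_q algebra_simps power2_eq_square char2_simps)
  moreover have "?x 4 = (orbit_x5 b d)^q"
    unfolding defs orbit_x5_def gamma_form_def using \<omega>_nonzero \<omega>q
    by (simp add: frobenius_simps, simp add: field_simps, simp add: \<omega>_power_q algebra_simps power2_eq_square char2_simps)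
  moreover have "?x 5 = orbit_x5 b d"
    unfolding defs orbit_x5_def gamma_form_def using \<omega>_nonzero
    by (simp, simp add: field_simps, simp add: \<omega>_power_q algebra_simps power2_eq_square char2_simps)
  moreover have "?x 6 = 1" unfolding defs by simp
  moreover have "?x = vec6 (?x 1) (?x 2) (?x 3) (?x 4) (?x 5) (?x 6)"
    by (rule vec6_expand) (simp add: mat_app_def)
  ultimately show ?thesis unfolding orbit_vec_def by simp
qed

definition orbit_shift :: "'a \<Rightarrow> 'a" where
  "orbit_shift \<delta> = \<delta> + 1 / norm_\<omega> + trace (\<omega>^q * \<gamma> / \<omega>)"

definition orbit_coef :: "'a \<Rightarrow> 'a \<Rightarrow> 'a \<Rightarrow> 'a" where
  "orbit_coef \<alpha> \<delta> \<beta> = (\<omega>^2 * orbit_shift \<delta>)^2 + \<omega>^2 * orbit_shift \<delta> + (\<omega> * \<alpha>) * (\<omega> * \<beta>^q + \<omega>^q) + \<gamma>"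

text \<open>The point \<open>(\<alpha>, \<alpha>\<^sup>q, \<delta>, \<beta>, \<beta>\<^sup>q, 1)\<close> of \<open>\<Sigma>\<close> lies in the orbit of \<open>S\<^sub>\<gamma>\<close> iff \<open>\<omega>\<^sup>2 s\<^sup>2 + \<omega> s + orbit_coef \<alpha> \<delta> \<beta>\<close>
  has a root \<open>s \<in> F\<^sub>q\<close>, i.e. iff the following expression vanishes; unlike the existential
  condition it is a polynomial along lines of \<open>\<Sigma>\<close>.\<close>

definition orbit_eqn :: "'a \<Rightarrow> 'a \<Rightarrow> 'a \<Rightarrow> 'a" where
  "orbit_eqn \<alpha> \<delta> \<beta> = (trace (\<omega>^q * orbit_coef \<alpha> \<delta> \<beta> / \<omega>))^2 + trace (orbit_coef \<alpha> \<delta> \<beta> / \<omega>)"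

lemma orbit_shift_in_Fq: "\<delta> \<in> Fq \<Longrightarrow> orbit_shift \<delta> \<in> Fq"
  unfolding orbit_shift_def using inverse_norm_\<omega>_in_Fq trace_in_Fq Fq_add by blast

lemma orbit_eqn_iff: "orbit_eqn \<alpha> \<delta> \<beta> = 0 \<longleftrightarrow> (\<exists>s\<in>Fq. \<omega>^2 * s^2 + \<omega> * s + orbit_coef \<alpha> \<delta> \<beta> = 0)"
  unfolding orbit_eqn_def by (rule exists_Fq_root_iff)

lemma orbit_coef_root_iff:
  "\<omega>^2 * s^2 + \<omega> * s + orbit_coef \<alpha> \<delta> \<beta> = 0 \<longleftrightarrow>
   (orbit_shift \<delta> * \<omega>^2 + s * \<omega>)^2 + (orbit_shift \<delta> * \<omega>^2 + s * \<omega>) = (\<omega> * \<alpha>) * (\<omega> * \<beta>^q + \<omega>^q) + \<gamma>"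
proof -
  have "(orbit_shift \<delta> * \<omega>^2 + s * \<omega>)^2 + (orbit_shift \<delta> * \<omega>^2 + s * \<omega>) + ((\<omega> * \<alpha>) * (\<omega> * \<beta>^q + \<omega>^q) + \<gamma>)
      = \<omega>^2 * s^2 + \<omega> * s + orbit_coef \<alpha> \<delta> \<beta>"
    unfolding orbit_coef_def by (simp add: square_add power_mult_distrib algebra_simps)
  thus ?thesis by (metis eq_iff_add_eq_0)
qed

lemma trace_divide_\<omega>:
  assumes "D \<in> Fq"
  shows "trace (\<Phi> / \<omega>) = D \<longleftrightarrow> \<Phi> / \<omega> + D * \<omega> \<in> Fq"
proof -
  have "trace (\<Phi> / \<omega> + D * \<omega>) = trace (\<Phi> / \<omega>) + D"
    using trace_mult_Fq[OF assms, of \<omega>] trace_\<omega>_eq_1 by (simp add: trace_add)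
  thus ?thesis by (metis eq_iff_add_eq_0 trace_eq_0_iff)
qed

lemma orbit_shift_orbit_x3: "orbit_shift (orbit_x3 a b c d) = trace (phi a b c d / \<omega>)"
proof -
  have "orbit_x3 a b c d = trace (phi a b c d / \<omega>) + trace (\<omega>^q * \<gamma> / \<omega>) + 1 / norm_\<omega>"
    unfolding orbit_x3_def by (simp add: trace_add add_divide_distrib)
  thus ?thesis unfolding orbit_shift_def by (simp add: algebra_simps char2_simps)
qed

lemma orbit_eqn_orbit_vec:
  assumes "a * d + b * c = 1"
  shows "orbit_eqn (orbit_x1 a c) (orbit_x3 a b c d) ((orbit_x5 b d)^q) = 0"
proof -
  define D where "D = orbit_shift (orbit_x3 a b c d)"
  have D: "D \<in> Fq" "trace (phi a b c d / \<omega>) = D"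
    unfolding D_def orbit_shift_orbit_x3 by (simp_all add: trace_in_Fq)
  define s where "s = phi a b c d / \<omega> + D * \<omega>"
  have s: "s \<in> Fq" using D trace_divide_\<omega> by (simp add: s_def)
  have "orbit_shift (orbit_x3 a b c d) * \<omega>^2 + s * \<omega> = phi a b c d"
    unfolding D_def[symmetric] s_def using \<omega>_nonzero by (simp add: field_simps power2_eq_square char2_simps)
  moreover have "\<omega> * orbit_x1 a c = gamma_form \<gamma> a c" "\<omega> * ((orbit_x5 b d)^q)^q + \<omega>^q = gamma_form \<gamma> b d"
    unfolding orbit_x1_def orbit_x5_def using \<omega>_nonzero by (simp_all add: char2_simps)
  ultimately have "\<omega>^2 * s^2 + \<omega> * s + orbit_coef (orbit_x1 a c) (orbit_x3 a b c d) ((orbit_x5 b d)^q) = 0"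
    unfolding orbit_coef_root_iff using phi_identity[of a b c d] assms
    by (simp add: power2_eq_square algebra_simps)
  thus ?thesis using orbit_eqn_iff s by blast
qed

lemma orbit_vec_of_orbit_eqn:
  assumes "\<delta> \<in> Fq" and "orbit_eqn \<alpha> \<delta> \<beta> = 0"
  obtains a b c d where "a * d + b * c = 1" "orbit_vec a b c d = vec6 \<alpha> (\<alpha>^q) \<delta> \<beta> (\<beta>^q) 1"
proof -
  obtain s where s: "s \<in> Fq" "\<omega>^2 * s^2 + \<omega> * s + orbit_coef \<alpha> \<delta> \<beta> = 0"
    using assms(2) orbit_eqn_iff by blast
  define D \<Phi> where "D = orbit_shift \<delta>" and "\<Phi> = D * \<omega>^2 + s * \<omega>"
  have \<Phi>: "\<Phi>^2 + \<Phi> = (\<omega> * \<alpha>) * (\<omega> * \<beta>^q + \<omega>^q) + \<gamma>"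
    using s(2) unfolding orbit_coef_root_iff D_def \<Phi>_def .
  have "\<omega> * \<alpha> \<noteq> 0" using \<Phi> artin_schreier_neq_\<gamma> by force
  then obtain a b c d where abcd: "a * d + b * c = 1" "gamma_form \<gamma> a c = \<omega> * \<alpha>"
      "gamma_form \<gamma> b d = \<omega> * \<beta>^q + \<omega>^q" "phi a b c d = \<Phi>"
    using determinant_one_solution \<Phi> by metis
  have "D \<in> Fq" unfolding D_def using orbit_shift_in_Fq assms(1) .
  moreover have "\<Phi> / \<omega> + D * \<omega> = s" unfolding \<Phi>_def using \<omega>_nonzero
    by (simp add: field_simps power2_eq_square char2_simps)
  ultimately have "trace (\<Phi> / \<omega>) = D" using trace_divide_\<omega> s(1) by simp
  hence "orbit_x3 a b c d = \<delta>"
    using orbit_shift_orbit_x3[of a b c d] abcd(4) unfolding D_def orbit_shift_def by simp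
  moreover have "orbit_x1 a c = \<alpha>" "orbit_x5 b d = \<beta>^q"
    unfolding orbit_x1_def orbit_x5_def abcd(2,3) using \<omega>_nonzero by (simp_all add: char2_simps)
  ultimately show ?thesis using that abcd(1) unfolding orbit_vec_def by simp
qed

lemma orbit_vec_eq_iff:
  assumes "\<delta> \<in> Fq"
  shows "(\<exists>a b c d. a * d + b * c = 1 \<and> orbit_vec a b c d = vec6 \<alpha> (\<alpha>^q) \<delta> \<beta> (\<beta>^q) 1)
    \<longleftrightarrow> orbit_eqn \<alpha> \<delta> \<beta> = 0"
proof
  assume "\<exists>a b c d. a * d + b * c = 1 \<and> orbit_vec a b c d = vec6 \<alpha> (\<alpha>^q) \<delta> \<beta> (\<beta>^q) 1"
  then obtain a b c d where "a * d + b * c = 1" "orbit_vec a b c d = vec6 \<alpha> (\<alpha>^q) \<delta> \<beta> (\<beta>^q) 1"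
    by blast
  thus "orbit_eqn \<alpha> \<delta> \<beta> = 0"
    using orbit_eqn_orbit_vec unfolding orbit_vec_def vec6_eq_iff by metis
qed (use orbit_vec_of_orbit_eqn[OF assms] in metis)

lemma pt_in_orbit_iff:
  assumes "sigma_vec v"
  shows "pt v \<in> orbit_S q \<omega> \<gamma> \<longleftrightarrow> v 6 \<noteq> 0 \<and> orbit_eqn (v 1 / v 6) (v 3 / v 6) (v 4 / v 6) = 0"
proof -
  obtain a0 d0 b0 f0 where v: "v = vec6 a0 (a0^q) d0 b0 (b0^q) f0" "d0 \<in> Fq" "f0 \<in> Fq"
    using assms sigma_vecE by metis
  have norm: "pt (orbit_vec a b c d) = pt v \<longleftrightarrow> v 6 \<noteq> 0 \<and> orbit_vec a b c d = vscale (1 / v 6) v"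
    for a b c d by (rule pt_eq_pt_normalized) (simp add: orbit_vec_def)
  have "pt v \<in> orbit_S q \<omega> \<gamma> \<longleftrightarrow> (\<exists>a b c d. a * d + b * c = 1 \<and> pt (orbit_vec a b c d) = pt v)"
    unfolding orbit_S_def M_S_gamma_eq_orbit_vec by blast
  also have "\<dots> \<longleftrightarrow> v 6 \<noteq> 0 \<and> (\<exists>a b c d. a * d + b * c = 1 \<and> orbit_vec a b c d = vscale (1 / v 6) v)"
    unfolding norm by blast
  finally have orb: "pt v \<in> orbit_S q \<omega> \<gamma> \<longleftrightarrow> \<dots>" .
  show ?thesis
  proof (cases "f0 = 0")
    case True thus ?thesis using orb v(1) by simp
  next
    case False
    have "vscale (1 / f0) v = vec6 (a0 / f0) ((a0 / f0)^q) (d0 / f0) (b0 / f0) ((b0 / f0)^q) 1"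
      using v(1,3) False by (simp add: vscale_vec6 vec6_eq_iff power_divide Fq_iff)
    moreover have "d0 / f0 \<in> Fq" using v Fq_divide by blast
    ultimately show ?thesis using orb orbit_vec_eq_iff v(1) by simp
  qed
qed

lemma pt_in_Oset_iff:
  assumes "sigma_vec v" "v \<noteq> (\<lambda>_. 0)"
  shows "pt v \<in> Oset q \<omega> \<gamma> \<longleftrightarrow>
    (v 6 = 0 \<and> Qform v = 0) \<or> (v 6 \<noteq> 0 \<and> orbit_eqn (v 1 / v 6) (v 3 / v 6) (v 4 / v 6) = 0)"
  unfolding Oset_def using pt_in_Qset_iff[OF assms] pt_in_orbit_iff[OF assms(1)] by blast

section \<open>Lines of \<open>W(5,q)\<close> and the set \<open>\<O>\<close>\<close>

definition line_coef1 :: "'a \<Rightarrow> 'a \<Rightarrow> 'a \<Rightarrow> 'a \<Rightarrow> 'a \<Rightarrow> 'a" where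
  "line_coef1 \<alpha> \<beta> a b \<epsilon> = \<omega>^2 * \<epsilon> + \<omega>^2 * \<alpha> * b^q + \<omega> * a * (\<omega> * \<beta>^q + \<omega>^q)"

definition line_coef2 :: "'a \<Rightarrow> 'a \<Rightarrow> 'a \<Rightarrow> 'a" where
  "line_coef2 a b \<epsilon> = (\<omega>^2 * \<epsilon>)^2 + \<omega>^2 * a * b^q"

lemma orbit_coef_on_line:
  assumes "t \<in> Fq"
  shows "orbit_coef (\<alpha> + t * a) (\<delta> + t * \<epsilon>) (\<beta> + t * b)
    = orbit_coef \<alpha> \<delta> \<beta> + t * line_coef1 \<alpha> \<beta> a b \<epsilon> + t^2 * line_coef2 a b \<epsilon>"
proof -
  have "(\<beta> + t * b)^q = \<beta>^q + t * b^q" using assms by (simp add: frobenius_simps Fq_iff)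
  moreover have "orbit_shift (\<delta> + t * \<epsilon>) = orbit_shift \<delta> + t * \<epsilon>" by (simp add: orbit_shift_def algebra_simps)
  ultimately show ?thesis unfolding orbit_coef_def line_coef1_def line_coef2_def
    by (simp add: algebra_simps power2_eq_square char2_simps)
qed

lemma orbit_eqn_on_line:
  fixes \<alpha> \<delta> \<beta> a b \<epsilon> t :: 'a
  assumes t: "t \<in> Fq"
  defines "C1 \<equiv> line_coef1 \<alpha> \<beta> a b \<epsilon>" and "C2 \<equiv> line_coef2 a b \<epsilon>"
  shows "orbit_eqn (\<alpha> + t * a) (\<delta> + t * \<epsilon>) (\<beta> + t * b) =
     orbit_eqn \<alpha> \<delta> \<beta> + t * trace (C1 / \<omega>) + t^2 * ((trace (\<omega>^q * C1 / \<omega>))^2 + trace (C2 / \<omega>))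
      + (t^2)^2 * (trace (\<omega>^q * C2 / \<omega>))^2"
proof -
  have tr: "trace (x + t * y + t^2 * z) = trace x + t * trace y + t^2 * trace z" for x y z
    using t by (simp add: trace_add trace_mult_Fq Fq_power)
  have e1: "\<omega>^q * (orbit_coef \<alpha> \<delta> \<beta> + t * C1 + t^2 * C2) / \<omega> = \<omega>^q * orbit_coef \<alpha> \<delta> \<beta> / \<omega> + t * (\<omega>^q * C1 / \<omega>) + t^2 * (\<omega>^q * C2 / \<omega>)"
    and e2: "(orbit_coef \<alpha> \<delta> \<beta> + t * C1 + t^2 * C2) / \<omega> = orbit_coef \<alpha> \<delta> \<beta> / \<omega> + t * (C1 / \<omega>) + t^2 * (C2 / \<omega>)"
    by (simp_all add: algebra_simps add_divide_distrib)
  show ?thesis unfolding orbit_eqn_def orbit_coef_on_line[OF t] C1_def[symmetric] C2_def[symmetric] e1 e2 tr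
    by (simp add: square_add power_mult_distrib algebra_simps power2_eq_square char2_simps)
qed

lemma trace_line_coef1_eq_hform:
  assumes "\<epsilon> \<in> Fq"
  shows "trace (line_coef1 \<alpha> \<beta> a b \<epsilon> / \<omega>) = hform q \<omega> (vec6 \<alpha> (\<alpha>^q) \<delta> \<beta> (\<beta>^q) 1) (vec6 a (a^q) \<epsilon> b (b^q) 0)"
proof -
  have "line_coef1 \<alpha> \<beta> a b \<epsilon> / \<omega> = \<omega> * \<epsilon> + \<omega> * \<alpha> * b^q + a * (\<omega> * \<beta>^q + \<omega>^q)"
    unfolding line_coef1_def using \<omega>_nonzero by (simp add: field_simps power2_eq_square)
  thus ?thesis unfolding trace_def hform_def using assms q_ge_2
    by (simp add: Fq_iff frobenius_simps \<omega>_power_q algebra_simps char2_simps zero_power)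
qed

lemma trace_line_coef2_eq_Qform:
  assumes "\<epsilon> \<in> Fq"
  shows "trace (\<omega>^q * line_coef2 a b \<epsilon> / \<omega>) = norm_\<omega> * Qform (vec6 a (a^q) \<epsilon> b (b^q) 0)"
proof -
  have e: "\<omega>^q * line_coef2 a b \<epsilon> / \<omega> = (norm_\<omega> * \<epsilon>^2) * \<omega>^2 + norm_\<omega> * (a * b^q)"
    unfolding line_coef2_def norm_\<omega>_eq using \<omega>_nonzero by (simp add: field_simps power2_eq_square)
  have "norm_\<omega> * \<epsilon>^2 \<in> Fq" using assms norm_\<omega>_in_Fq Fq_mult Fq_power by blast
  hence "trace (\<omega>^q * line_coef2 a b \<epsilon> / \<omega>) = norm_\<omega> * \<epsilon>^2 * trace (\<omega>^2) + norm_\<omega> * trace (a * b^q)"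
    unfolding e by (simp add: trace_add trace_mult_Fq norm_\<omega>_in_Fq)
  thus ?thesis unfolding trace_\<omega>_square Qform_def by (simp add: trace_def power_mult_distrib algebra_simps)
qed

text \<open>On an \<open>h\<close>-isotropic line the linear coefficient of \<open>orbit_eqn\<close> vanishes, so in characteristic 2
  the whole expression is the square of a quadratic polynomial in the line parameter.\<close>

lemma orbit_eqn_on_line_square:
  assumes "\<epsilon> \<in> Fq" and "hform q \<omega> (vec6 \<alpha> (\<alpha>^q) \<delta> \<beta> (\<beta>^q) 1) (vec6 a (a^q) \<epsilon> b (b^q) 0) = 0"
  obtains \<rho> \<kappa> where
    "\<And>t. t \<in> Fq \<Longrightarrow> orbit_eqn (\<alpha> + t * a) (\<delta> + t * \<epsilon>) (\<beta> + t * b) = 0 \<longleftrightarrow>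
        (norm_\<omega> * Qform (vec6 a (a^q) \<epsilon> b (b^q) 0)) * t^2 + \<rho> * t + \<kappa> = 0"
    and "\<kappa> = 0 \<longleftrightarrow> orbit_eqn \<alpha> \<delta> \<beta> = 0"
    and "\<rho>^2 = (trace (\<omega>^q * line_coef1 \<alpha> \<beta> a b \<epsilon> / \<omega>))^2 + trace (line_coef2 a b \<epsilon> / \<omega>)"
proof -
  obtain \<rho> where \<rho>: "\<rho>^2 = (trace (\<omega>^q * line_coef1 \<alpha> \<beta> a b \<epsilon> / \<omega>))^2 + trace (line_coef2 a b \<epsilon> / \<omega>)"
    using exists_sqrt by blast
  obtain \<kappa> where \<kappa>: "\<kappa>^2 = orbit_eqn \<alpha> \<delta> \<beta>" using exists_sqrt by blast
  define A where "A = norm_\<omega> * Qform (vec6 a (a^q) \<epsilon> b (b^q) 0)"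
  have C1: "trace (line_coef1 \<alpha> \<beta> a b \<epsilon> / \<omega>) = 0"
    using trace_line_coef1_eq_hform[OF assms(1), of \<alpha> \<beta> a b \<delta>] assms(2) by simp
  have "orbit_eqn (\<alpha> + t * a) (\<delta> + t * \<epsilon>) (\<beta> + t * b) = (A * t^2 + \<rho> * t + \<kappa>)^2" if "t \<in> Fq" for t
  proof -
    have "orbit_eqn (\<alpha> + t * a) (\<delta> + t * \<epsilon>) (\<beta> + t * b) = \<kappa>^2 + t^2 * \<rho>^2 + (t^2)^2 * A^2"
      unfolding orbit_eqn_on_line[OF that] C1 trace_line_coef2_eq_Qform[OF assms(1)] A_def[symmetric] \<rho>[symmetric] \<kappa>[symmetric] by simp
    also have "\<dots> = (A * t^2 + \<rho> * t + \<kappa>)^2" by (simp add: square_add power_mult_distrib algebra_simps)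
    finally show ?thesis .
  qed
  thus ?thesis using that[of \<rho> \<kappa>] \<rho> \<kappa> unfolding A_def by (metis power_zero_numeral zero_power2 power_eq_0_iff)
qed

lemma trace_\<omega>_cube: "trace (\<omega>^3) = 1 + norm_\<omega>"
proof -
  have "trace (\<omega>^3) = \<omega>^3 + (1 + \<omega>)^3"
    unfolding trace_def by (simp add: power_mult[symmetric] mult.commute power_mult \<omega>_power_q)
  thus ?thesis unfolding norm_\<omega>_eq_square by (simp add: algebra_simps power2_eq_square power3_eq_cube char2_simps)
qed

lemma isotropic_direction_square:
  assumes "\<epsilon> \<in> Fq"
    and "hform q \<omega> (vec6 \<alpha> (\<alpha>^q) \<delta> \<beta> (\<beta>^q) 1) (vec6 a (a^q) \<epsilon> b (b^q) 0) = 0"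
    and "Qform (vec6 a (a^q) \<epsilon> b (b^q) 0) = 0"
    and "(trace (\<omega>^q * line_coef1 \<alpha> \<beta> a b \<epsilon> / \<omega>))^2 + trace (line_coef2 a b \<epsilon> / \<omega>) = 0"
  defines "Y \<equiv> \<omega> * (\<alpha> * b^q + a * \<beta>^q) + \<omega>^q * a"
  shows "\<epsilon> = trace Y" and "a * b^q = Y^2"
proof -
  define m where "m = a * b^q"
  have c1: "line_coef1 \<alpha> \<beta> a b \<epsilon> / \<omega> = \<omega> * \<epsilon> + Y"
    unfolding line_coef1_def Y_def using \<omega>_nonzero by (simp add: field_simps power2_eq_square)
  have "\<epsilon> * trace \<omega> + trace Y = 0"
    using trace_line_coef1_eq_hform[OF assms(1), of \<alpha> \<beta> a b \<delta>] assms(2) trace_mult_Fq[OF assms(1), of \<omega>]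
    unfolding c1 by (simp add: trace_add mult.commute)
  thus \<epsilon>: "\<epsilon> = trace Y" using trace_\<omega>_eq_1 by (metis eq_iff_add_eq_0 mult_1_right)
  have "Qform (vec6 a (a^q) \<epsilon> b (b^q) 0) = \<epsilon>^2 + trace m"
    unfolding Qform_def m_def trace_def by (simp add: power_mult_distrib algebra_simps)
  hence \<epsilon>2: "trace (Y^2) = trace m" using assms(3) \<epsilon> trace_square by (metis eq_iff_add_eq_0)
  have "\<omega>^q * line_coef1 \<alpha> \<beta> a b \<epsilon> / \<omega> = norm_\<omega> * \<epsilon> + \<omega>^q * Y"
    using c1 unfolding norm_\<omega>_eq by (metis distrib_left mult.assoc mult.commute times_divide_eq_right)
  moreover have "norm_\<omega> * \<epsilon> \<in> Fq" using norm_\<omega>_in_Fq assms(1) Fq_mult by blast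
  ultimately have A1: "trace (\<omega>^q * line_coef1 \<alpha> \<beta> a b \<epsilon> / \<omega>) = trace (\<omega>^q * Y)"
    by (simp add: trace_add trace_Fq)
  have "line_coef2 a b \<epsilon> / \<omega> = \<epsilon>^2 * \<omega>^3 + \<omega> * m"
    unfolding line_coef2_def m_def using \<omega>_nonzero by (simp add: field_simps power2_eq_square power3_eq_cube)
  moreover have "trace (\<epsilon>^2 * \<omega>^3) = \<epsilon>^2 * (1 + norm_\<omega>)"
    using trace_mult_Fq[OF Fq_power[OF assms(1)]] trace_\<omega>_cube by simp
  moreover have "\<epsilon>^2 = trace (Y^2)" using \<epsilon> trace_square by simp
  ultimately have B2: "trace (line_coef2 a b \<epsilon> / \<omega>) = (1 + norm_\<omega>) * trace (Y^2) + trace (\<omega> * m)"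
    by (simp add: trace_add mult.commute)
  have \<omega>_id: "(\<omega>^q)^2 + (1 + norm_\<omega>) = \<omega>"
    unfolding norm_\<omega>_eq_square \<omega>_power_q by (simp add: algebra_simps power2_eq_square char2_simps)
  have "1 + norm_\<omega> \<in> Fq" using norm_\<omega>_in_Fq Fq_add one_in_Fq by blast
  hence "(trace (\<omega>^q * Y))^2 + (1 + norm_\<omega>) * trace (Y^2) + trace (\<omega> * m)
      = trace ((\<omega>^q)^2 * Y^2) + trace ((1 + norm_\<omega>) * Y^2) + trace (\<omega> * m)"
    by (simp add: trace_square trace_mult_Fq power_mult_distrib)
  also have "\<dots> = trace (((\<omega>^q)^2 + (1 + norm_\<omega>)) * Y^2 + \<omega> * m)"
    by (simp only: trace_add distrib_right)
  also have "\<dots> = trace (\<omega> * (Y^2 + m))" unfolding \<omega>_id by (simp add: algebra_simps)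
  finally have "trace (\<omega> * (Y^2 + m)) = 0" using assms(4) unfolding A1 B2 by (simp add: algebra_simps)
  moreover have "Y^2 + m \<in> Fq" using \<epsilon>2 by (simp add: trace_add add_self_char2 flip: trace_eq_0_iff)
  ultimately have "Y^2 + m = 0" using trace_mult_Fq[of "Y^2 + m" \<omega>] trace_\<omega>_eq_1 by (simp add: mult.commute)
  thus "a * b^q = Y^2" unfolding m_def by (metis eq_iff_add_eq_0 add.commute)
qed

text \<open>If the quadratic of \<open>orbit_eqn_on_line_square\<close> vanished identically, \<open>\<gamma>\<close> would be a value of
  \<open>x\<^sup>2 + x\<close>.\<close>

lemma orbit_eqn_on_line_nonzero:
  assumes "\<epsilon> \<in> Fq"
    and "hform q \<omega> (vec6 \<alpha> (\<alpha>^q) \<delta> \<beta> (\<beta>^q) 1) (vec6 a (a^q) \<epsilon> b (b^q) 0) = 0"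
    and "Qform (vec6 a (a^q) \<epsilon> b (b^q) 0) = 0"
    and "(trace (\<omega>^q * line_coef1 \<alpha> \<beta> a b \<epsilon> / \<omega>))^2 + trace (line_coef2 a b \<epsilon> / \<omega>) = 0"
    and "orbit_eqn \<alpha> \<delta> \<beta> = 0"
    and "a \<noteq> 0 \<or> \<epsilon> \<noteq> 0 \<or> b \<noteq> 0"
  shows False
proof -
  define A C where "A = \<omega> * \<alpha>" and "C = \<omega> * \<beta>^q + \<omega>^q"
  have "\<omega> * (\<alpha> * b^q + a * \<beta>^q) + \<omega>^q * a = A * b^q + a * C" by (simp add: A_def C_def algebra_simps)
  note Y = isotropic_direction_square[OF assms(1-4), unfolded this]
  have "a \<noteq> 0 \<or> b^q \<noteq> 0" using assms(6) Y(1) trace_Fq[OF zero_in_Fq] q_ge_2 by (auto simp: zero_power)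
  then obtain x where x: "artin_schreier x = A * C"
    using artin_schreier_of_square_relation[OF CHAR_eq_2 Y(2)] by (metis rangeE)
  obtain s where "\<omega>^2 * s^2 + \<omega> * s + orbit_coef \<alpha> \<delta> \<beta> = 0" using assms(5) orbit_eqn_iff by blast
  then obtain \<Phi> where "\<Phi>^2 + \<Phi> = A * C + \<gamma>" unfolding orbit_coef_root_iff A_def C_def by blast
  hence "artin_schreier (\<Phi> + x) = \<gamma>"
    using x unfolding artin_schreier_add[OF CHAR_eq_2] by (simp add: artin_schreier_def algebra_simps char2_simps)
  thus False using \<gamma>_notin_artin_schreier by (metis rangeI)
qed

lemma Qset_subset_Oset: "Qset q \<subseteq> Oset q \<omega> \<gamma>"
  unfolding Oset_def by blast

lemma pt_in_Oset_iff_X6_eq_0: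
  assumes "sigma_vec w" "w \<noteq> (\<lambda>_. 0)" "w 6 = 0"
  shows "pt w \<in> Oset q \<omega> \<gamma> \<longleftrightarrow> Qform w = 0"
  using pt_in_Oset_iff[OF assms(1,2)] assms(3) by simp

lemma Oset_on_line_in_Qset:
  assumes "sigma_vec v" "sigma_vec w" "Fq_indep v w" "v 6 = 0" "w 6 = 0" "t \<in> Fq"
  shows "pt (vadd v (vscale t w)) \<in> Oset q \<omega> \<gamma> \<longleftrightarrow> Qform w * t^2 + Qpolar v w * t + Qform v = 0"
proof -
  have "vadd v (vscale t w) 6 = 0" using assms(4,5) by (simp add: vadd_def vscale_def)
  hence "pt (vadd v (vscale t w)) \<in> Oset q \<omega> \<gamma> \<longleftrightarrow> Qform (vadd (vscale 1 v) (vscale t w)) = 0"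
    using pt_in_Oset_iff[OF sigma_vec_line[OF assms(1,2,6)] Fq_indep_lincomb_nonzero[OF assms(3,6)]] by simp
  thus ?thesis unfolding Qform_lincomb by (simp add: algebra_simps)
qed

lemma Oset_on_line_off_Qset:
  assumes "sigma_vec v" "sigma_vec w" "Fq_indep v w" "v 6 = 1" "w 6 = 0"
    and "hform q \<omega> v w = 0"
  obtains \<rho> \<kappa> where
    "\<And>t. t \<in> Fq \<Longrightarrow> pt (vadd v (vscale t w)) \<in> Oset q \<omega> \<gamma> \<longleftrightarrow> (norm_\<omega> * Qform w) * t^2 + \<rho> * t + \<kappa> = 0"
    and "Qform w = 0 \<Longrightarrow> \<rho> = 0 \<Longrightarrow> \<kappa> = 0 \<Longrightarrow> False"
proof -
  obtain \<alpha> \<delta> \<beta> f where v: "v = vec6 \<alpha> (\<alpha>^q) \<delta> \<beta> (\<beta>^q) f" using assms(1) sigma_vecE by metis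
  obtain a \<epsilon> b g where w: "w = vec6 a (a^q) \<epsilon> b (b^q) g" "\<epsilon> \<in> Fq" using assms(2) sigma_vecE by metis
  have fg: "f = 1" "g = 0" using assms(4,5) v w by simp_all
  have h: "hform q \<omega> (vec6 \<alpha> (\<alpha>^q) \<delta> \<beta> (\<beta>^q) 1) (vec6 a (a^q) \<epsilon> b (b^q) 0) = 0"
    using assms(6) v w fg by simp
  obtain \<rho> \<kappa> where line: "\<And>t. t \<in> Fq \<Longrightarrow> orbit_eqn (\<alpha> + t * a) (\<delta> + t * \<epsilon>) (\<beta> + t * b) = 0 \<longleftrightarrow>
        (norm_\<omega> * Qform w) * t^2 + \<rho> * t + \<kappa> = 0"
      and \<kappa>: "\<kappa> = 0 \<longleftrightarrow> orbit_eqn \<alpha> \<delta> \<beta> = 0"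
      and \<rho>: "\<rho>^2 = (trace (\<omega>^q * line_coef1 \<alpha> \<beta> a b \<epsilon> / \<omega>))^2 + trace (line_coef2 a b \<epsilon> / \<omega>)"
    using orbit_eqn_on_line_square[OF w(2) h] unfolding w fg by metis
  show ?thesis
  proof (rule that)
    fix t assume t: "t \<in> Fq"
    have "vadd v (vscale t w) = vec6 (\<alpha> + t * a) ((\<alpha> + t * a)^q) (\<delta> + t * \<epsilon>) (\<beta> + t * b) ((\<beta> + t * b)^q) 1"
      using t unfolding v w fg by (simp add: vadd_vec6 vscale_vec6 Fq_iff frobenius_simps)
    thus "pt (vadd v (vscale t w)) \<in> Oset q \<omega> \<gamma> \<longleftrightarrow> (norm_\<omega> * Qform w) * t^2 + \<rho> * t + \<kappa> = 0"
      using pt_in_Oset_iff[OF sigma_vec_line[OF assms(1,2) t] Fq_indep_lincomb_nonzero[OF assms(3) t]] line[OF t]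
      by simp
  next
    assume "Qform w = 0" "\<rho> = 0" "\<kappa> = 0"
    moreover have "a \<noteq> 0 \<or> \<epsilon> \<noteq> 0 \<or> b \<noteq> 0"
      using Fq_indep_nonzero[OF assms(3)] w fg q_ge_2 by (auto simp: vec6_eq_0_iff)
    ultimately show False using orbit_eqn_on_line_nonzero[OF w(2) h] \<kappa> \<rho> unfolding w fg by simp
  qed
qed

theorem W_line_meets_Oset:
  assumes "W_line q \<omega> L"
  shows "card (L \<inter> Oset q \<omega> \<gamma>) \<in> {0, 1, 2, q + 1}" and "L \<subseteq> Oset q \<omega> \<gamma> \<Longrightarrow> L \<in> spread q"
proof -
  obtain v w where vw: "sigma_vec v" "sigma_vec w" "Fq_indep v w" and L: "L = line_pts v w"
    and w6: "w 6 = 0" and v6: "v 6 = 0 \<or> v 6 = 1" and h: "hform q \<omega> v w = 0"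
    using W_line_normal_form[OF assms] by metis
  have inf: "pt w \<in> Oset q \<omega> \<gamma> \<longleftrightarrow> Qform w = 0"
    using pt_in_Oset_iff_X6_eq_0[OF vw(2) _ w6] Fq_indep_nonzero[OF vw(3)] by blast
  have "card (L \<inter> Oset q \<omega> \<gamma>) \<in> {0, 1, 2, q + 1} \<and> (L \<subseteq> Oset q \<omega> \<gamma> \<longrightarrow> L \<in> spread q)"
  proof (cases "v 6 = 0")
    case True
    note quad = line_pts_Int_quadratic[OF vw inf Oset_on_line_in_Qset[OF vw True w6]]
    show ?thesis using quad singular_line_in_spread[OF vw True w6 _ _ _ h] unfolding L by blast
  next
    case False
    obtain \<rho> \<kappa> where on_line: "\<And>t. t \<in> Fq \<Longrightarrow> pt (vadd v (vscale t w)) \<in> Oset q \<omega> \<gamma> \<longleftrightarrow>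
        (norm_\<omega> * Qform w) * t^2 + \<rho> * t + \<kappa> = 0" and never: "Qform w = 0 \<Longrightarrow> \<rho> = 0 \<Longrightarrow> \<kappa> = 0 \<Longrightarrow> False"
      using Oset_on_line_off_Qset[OF vw _ w6 h] False v6 by metis
    have "pt w \<in> Oset q \<omega> \<gamma> \<longleftrightarrow> norm_\<omega> * Qform w = 0" using inf norm_\<omega>_nonzero by simp
    note quad = line_pts_Int_quadratic[OF vw this on_line]
    show ?thesis using quad never norm_\<omega>_nonzero unfolding L by auto
  qed
  thus "card (L \<inter> Oset q \<omega> \<gamma>) \<in> {0, 1, 2, q + 1}" and "L \<subseteq> Oset q \<omega> \<gamma> \<Longrightarrow> L \<in> spread q" by blast+
qed

theorem W_lines_in_Oset_eq_spread: "{L. W_line q \<omega> L \<and> L \<subseteq> Oset q \<omega> \<gamma>} = spread q"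
  using W_line_meets_Oset(2) spread_W_line_in_Qset Qset_subset_Oset by blast

end

theorem mainTheorem19:
  fixes q :: nat and \<omega> \<gamma> :: "'a::{field,finite}"
  assumes "\<exists>p e. prime p \<and> e \<ge> 1 \<and> q = p ^ e" and "even q"
    and "card (UNIV :: 'a set) = q ^ 2"
    and "\<omega> \<notin> subF q" and "\<omega> + \<omega> ^ q = 1"
    and "irreducible [:\<gamma>, 1, 1:]"
  shows "(\<forall>L. W_line q \<omega> L \<longrightarrow> card (L \<inter> Oset q \<omega> \<gamma>) \<in> {0, 1, 2, q + 1})
       \<and> {L. W_line q \<omega> L \<and> L \<subseteq> Oset q \<omega> \<gamma>} = spread q
       \<and> card {L. W_line q \<omega> L \<and> L \<subseteq> Oset q \<omega> \<gamma>} = q ^ 2 + 1"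
proof -
  obtain p e where pe: "prime p" "e \<ge> 1" "q = p ^ e" using assms(1) by blast
  have "p = 2"
    using assms(2) pe by (metis dvd_refl even_power prime_dvd_power_nat primes_dvd_imp_eq two_is_prime_nat)
  then interpret W5q_orbit q e \<omega> \<gamma>
    using pe assms(3-6) irreducible_quadratic_no_root[OF assms(6)]
    by unfold_locales (auto simp: subF_def)
  show ?thesis using W_line_meets_Oset(1) W_lines_in_Oset_eq_spread card_spread by simp
qed

end
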